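(* For any non-negative real number $T$ and any integer $a$, \[P\left(\|X\|_T\leq p^a\right) = e^{-\sigma\alpha T p^{-ab}},\qquad\text{where } \|X\|_T=\sup_{0\le t\le T}|X_t| \text{ and } \alpha = 1-\frac{p^b-1}{p^{b+1}-1}.\]
   Context: Fix a prime $p$. $\mathbb Q_p$ is the field of $p$-adic numbers with absolute value $|\cdot|$, $\mu$ is the Haar measure on $\mathbb Q_p$ normalized so that $\mu(\mathbb Z_p)=1$ (write $dx$ for $d\mu(x)$). For $x\in\mathbb Q_p$ write $x=\sum_k a_x(k)p^k$ with digits $a_x(k)\in\{0,\dots,p-1\}$, set $\{x\}=\sum_{k<0}a_x(k)p^k$ and $\chi(x)=e^{2\pi i\{x\}}$. Fix positive reals $b$ (the exponent of the Vladimirov operator) and $\sigma$ (the diffusion constant). For $t>0$ let $\rho(t,x)=\int_{\mathbb Q_p}\chi(xy)e^{-\sigma t|y|^b}\,dy$, the fundamental solution of $\frac{d}{dt}f=-\sigma\Delta f$ where $\Delta$ is the Vladimirov operator with symbol $|\xi|^b$; it is a probability density. $P$ is the probability measure on the Skorokhod space $D([0,\infty):\mathbb Q_p)$ of càdlàg $\mathbb Q_p$-valued paths, concentrated on paths with $\omega(0)=0$, whose finite-dimensional distributions are: for $0=t_0<t_1<\dots<t_k$ and Borel $U_1,\dots,U_k$, $P(X_{t_1}\in U_1,\dots,X_{t_k}\in U_k)=\int_{U_1}\cdots\int_{U_k}\prod_{i=1}^k\rho(t_i-t_{i-1},x_i-x_{i-1})\,dx_k\cdots dx_1$ with $x_0=0$.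 Here $X_t(\omega)=\omega(t)$ ($p$-adic Brownian motion). *)

theory Defs
  imports "HOL-Probability.Probability"
begin

text \<open>p-adic numbers represented by their digit functions
  x = sum_k a_x(k) p^k with digits in {0..p-1}, finitely many nonzero digits at negative indices.\<close>

definition Qp :: "nat \<Rightarrow> (int \<Rightarrow> nat) set" where
  "Qp p = {d. (\<forall>k. d k < p) \<and> (\<exists>N. \<forall>k<N. d k = 0)}"

definition pzero :: "int \<Rightarrow> nat" where
  "pzero = (\<lambda>_. 0)"

definition ptrunc :: "nat \<Rightarrow> (int \<Rightarrow> nat) \<Rightarrow> int \<Rightarrow> real" where
  "ptrunc p x k = (\<Sum>j\<in>{j. j < k \<and> x j \<noteq> 0}. real (x j) * real p powi j)"

text \<open>k-th p-adic digit of a real number s in Z[1/p] determined modulo p^(k+1).\<close>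
definition pdigit :: "nat \<Rightarrow> real \<Rightarrow> int \<Rightarrow> nat" where
  "pdigit p s k = nat (\<lfloor>s / real p powi k\<rfloor> mod int p)"

definition pval :: "(int \<Rightarrow> nat) \<Rightarrow> int" where
  "pval x = (if x = pzero then 0 else (LEAST k. x k \<noteq> 0))"

definition padd :: "nat \<Rightarrow> (int \<Rightarrow> nat) \<Rightarrow> (int \<Rightarrow> nat) \<Rightarrow> (int \<Rightarrow> nat)" where
  "padd p x y = (\<lambda>k. pdigit p (ptrunc p x (k + 1) + ptrunc p y (k + 1)) k)"

definition pneg :: "nat \<Rightarrow> (int \<Rightarrow> nat) \<Rightarrow> (int \<Rightarrow> nat)" where
  "pneg p x = (\<lambda>k. pdigit p (- ptrunc p x (k + 1)) k)"

definition psub :: "nat \<Rightarrow> (int \<Rightarrow> nat) \<Rightarrow> (int \<Rightarrow> nat) \<Rightarrow> (int \<Rightarrow> nat)" where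
  "psub p x y = padd p x (pneg p y)"

text \<open>Product: digit k of xy is determined by the truncations at a sufficiently large level K.\<close>
definition pmul :: "nat \<Rightarrow> (int \<Rightarrow> nat) \<Rightarrow> (int \<Rightarrow> nat) \<Rightarrow> (int \<Rightarrow> nat)" where
  "pmul p x y = (\<lambda>k. let K = max (k + 1) 0 + max 0 (- pval x) + max 0 (- pval y)
                       in pdigit p (ptrunc p x K * ptrunc p y K) k)"

definition pabs :: "nat \<Rightarrow> (int \<Rightarrow> nat) \<Rightarrow> real" where
  "pabs p x = (if x = pzero then 0 else real p powi (- pval x))"

definition pdist :: "nat \<Rightarrow> (int \<Rightarrow> nat) \<Rightarrow> (int \<Rightarrow> nat) \<Rightarrow> real" where
  "pdist p x y = pabs p (psub p x y)"

definition pfrac :: "nat \<Rightarrow> (int \<Rightarrow> nat) \<Rightarrow> real" where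
  "pfrac p x = ptrunc p x 0"

definition pchi :: "nat \<Rightarrow> (int \<Rightarrow> nat) \<Rightarrow> complex" where
  "pchi p x = exp (2 * complex_of_real pi * \<i> * complex_of_real (pfrac p x))"

definition Zp :: "nat \<Rightarrow> (int \<Rightarrow> nat) set" where
  "Zp p = {x \<in> Qp p. \<forall>k<0. x k = 0}"

definition padic_open :: "nat \<Rightarrow> (int \<Rightarrow> nat) set \<Rightarrow> bool" where
  "padic_open p U \<longleftrightarrow> U \<subseteq> Qp p \<and>
     (\<forall>x\<in>U. \<exists>r>0. {y \<in> Qp p. pdist p y x < r} \<subseteq> U)"

definition padic_borel :: "nat \<Rightarrow> (int \<Rightarrow> nat) set set" where
  "padic_borel p = sigma_sets (Qp p) {U. padic_open p U}"

definition is_haar :: "nat \<Rightarrow> (int \<Rightarrow> nat) measure \<Rightarrow> bool" where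
  "is_haar p \<mu> \<longleftrightarrow> space \<mu> = Qp p \<and> sets \<mu> = padic_borel p \<and>
     (\<forall>a\<in>Qp p. \<forall>A\<in>sets \<mu>. emeasure \<mu> ((\<lambda>x. padd p a x) ` A) = emeasure \<mu> A) \<and>
     emeasure \<mu> (Zp p) = 1"

definition prho :: "(int \<Rightarrow> nat) measure \<Rightarrow> nat \<Rightarrow> real \<Rightarrow> real \<Rightarrow> real \<Rightarrow> (int \<Rightarrow> nat) \<Rightarrow> real" where
  "prho \<mu> p b \<sigma> t x = Re (\<integral>y. pchi p (pmul p x y) *
        complex_of_real (exp (- \<sigma> * t * pabs p y powr b)) \<partial>\<mu>)"

definition cadlag_paths :: "nat \<Rightarrow> (real \<Rightarrow> int \<Rightarrow> nat) set" where
  "cadlag_paths p = {\<omega>. (\<forall>t. t < 0 \<longrightarrow> \<omega> t = pzero) \<and> (\<forall>t\<ge>0. \<omega> t \<in> Qp p) \<and>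
     (\<forall>t\<ge>0. \<forall>e>0. \<exists>\<delta>>0. \<forall>s. t \<le> s \<and> s < t + \<delta> \<longrightarrow> pdist p (\<omega> s) (\<omega> t) < e) \<and>
     (\<forall>t>0. \<exists>L\<in>Qp p. \<forall>e>0. \<exists>\<delta>>0. \<forall>s. t - \<delta> < s \<and> s < t \<longrightarrow> pdist p (\<omega> s) L < e)}"

text \<open>Sigma-algebra on Skorokhod space generated by the coordinate maps
  (coincides with the Borel sigma-algebra of the Skorokhod topology).\<close>
definition skorokhod_sets :: "nat \<Rightarrow> (real \<Rightarrow> int \<Rightarrow> nat) set set" where
  "skorokhod_sets p = sigma_sets (cadlag_paths p)
     {{\<omega> \<in> cadlag_paths p. \<omega> t \<in> U} | t U. t \<ge> 0 \<and> U \<in> padic_borel p}"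

definition is_padic_BM :: "nat \<Rightarrow> real \<Rightarrow> real \<Rightarrow> (int \<Rightarrow> nat) measure \<Rightarrow>
    (real \<Rightarrow> int \<Rightarrow> nat) measure \<Rightarrow> bool" where
  "is_padic_BM p b \<sigma> \<mu> P \<longleftrightarrow> prob_space P \<and>
     space P = cadlag_paths p \<and> sets P = skorokhod_sets p \<and>
     (AE \<omega> in P. \<omega> 0 = pzero) \<and>
     (\<forall>(k::nat) (ts::nat \<Rightarrow> real) (U::nat \<Rightarrow> (int \<Rightarrow> nat) set).
        1 \<le> k \<and> 0 < ts 0 \<and> (\<forall>i. Suc i < k \<longrightarrow> ts i < ts (Suc i)) \<and>
        (\<forall>i<k. U i \<in> padic_borel p) \<longrightarrow>
        emeasure P {\<omega> \<in> space P. \<forall>i<k. \<omega> (ts i) \<in> U i} =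
        (\<integral>\<^sup>+ xs. indicator (PiE {..<k} U) xs *
            (\<Prod>i<k. ennreal (prho \<mu> p b \<sigma>
                 (ts i - (if i = 0 then 0 else ts (i - 1)))
                 (psub p (xs i) (if i = 0 then pzero else xs (i - 1)))))
          \<partial>(PiM {..<k} (\<lambda>_. \<mu>))))"

end

theory Submission
  imports Defs
begin

(* Sampled at the times (i+1)T/N, the path is a random walk whose increments have density
   rho(T/N, .). The ball B = p^(-a) Z_p is a subgroup, and rho(t, y - c) only depends on the
   first digit in which y and c differ; hence the integral of rho(t, y - c) over y in B is one
   number I(t) for all c in B, and the walk stays in B for N steps with probability I(T/N)^N.
   Evaluating the character integral defining rho sphere by sphere gives rho explicitly and
   1 - I(t) = sigma t alpha p^(-ab) + O(t^2), so I(T/N)^N tends to exp(-sigma alpha T p^(-ab)).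
   Since balls are open and closed and paths are right continuous, the event that the path stays
   in B up to time T is the decreasing limit of the events along dyadic times. *)

section \<open>Digit expansions\<close>

definition digit_sum :: "nat \<Rightarrow> (int \<Rightarrow> nat) \<Rightarrow> int \<Rightarrow> int \<Rightarrow> real" where
  "digit_sum p x L k = (\<Sum>j\<in>{L..<k}. real (x j) * real p powi j)"

definition pmultiple :: "nat \<Rightarrow> real \<Rightarrow> int \<Rightarrow> bool" where
  "pmultiple p r e \<longleftrightarrow> (\<exists>n::int. r = of_int n * real p powi e)"

definition digits_agree :: "int \<Rightarrow> (int \<Rightarrow> nat) \<Rightarrow> (int \<Rightarrow> nat) \<Rightarrow> bool" where
  "digits_agree M x y \<longleftrightarrow> (\<forall>j<M. x j = y j)"

lemma int_exists_least:
  fixes P :: "int \<Rightarrow> bool"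
  assumes "P j0" "\<forall>j<L. \<not> P j"
  shows "\<exists>j. P j \<and> (\<forall>i<j. \<not> P i)"
proof -
  let ?R = "\<lambda>n::nat. P (L + int n)"
  have "L \<le> j0" using assms by (meson not_le)
  then have "?R (nat (j0 - L))" using assms by simp
  then have R: "?R (LEAST n. ?R n)" by (rule LeastI)
  show ?thesis
  proof (intro exI conjI allI impI)
    show "P (L + int (LEAST n. ?R n))" using R .
  next
    fix i assume i: "i < L + int (LEAST n. ?R n)"
    show "\<not> P i"
    proof (cases "i < L")
      case False
      then have "nat (i - L) < (LEAST n. ?R n)" using i by linarith
      then have "\<not> ?R (nat (i - L))" by (rule not_less_Least)
      then show ?thesis using False by simp
    qed (use assms in simp)
  qed
qed

locale padic =
  fixes p :: nat
  assumes p_ge_2: "2 \<le> p"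
begin

lemma p_pos: "0 < real p" using p_ge_2 by simp
lemma p_gt_1: "1 < real p" using p_ge_2 by simp
lemma ppow_pos: "0 < real p powi k" using p_pos by simp
lemma ppow_nonzero: "real p powi k \<noteq> 0" using p_pos by simp

lemma ppow_add: "real p powi (a + b) = real p powi a * real p powi b"
  by (rule power_int_add) (use p_pos in auto)

lemma ppow_mono: "a \<le> b \<Longrightarrow> real p powi a \<le> real p powi b"
  using p_gt_1 by (simp add: power_int_increasing)

lemma ppow_strict_mono: "a < b \<Longrightarrow> real p powi a < real p powi b"
  using p_gt_1 by (simp add: power_int_strict_increasing)

lemma ppow_le_iff: "real p powi a \<le> real p powi b \<longleftrightarrow> a \<le> b"
  using ppow_mono ppow_strict_mono by (meson linorder_not_le)

lemma ppow_less_iff: "real p powi a < real p powi b \<longleftrightarrow> a < b"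
  using ppow_mono ppow_strict_mono by (meson linorder_not_le)

lemma ppow_plus_1: "real p powi (k + 1) = real p * real p powi k"
  using ppow_add[of k 1] by simp

lemma ppow_1_plus [simp]: "real p powi (1 + k) = real p * real p powi k"
  using ppow_plus_1[of k] by (simp add: add.commute)

lemma ppow_minus_nat: "real p powi (- int n) = (1 / real p) ^ n"
  by (simp add: power_int_minus power_one_over inverse_eq_divide)

lemma floor_div_ppow_step:
  "\<lfloor>s / real p powi k\<rfloor> = int p * \<lfloor>s / real p powi (k + 1)\<rfloor> + int (pdigit p s k)"
proof -
  have e: "s / real p powi (k + 1) = (s / real p powi k) / real_of_int (int p)"
    unfolding ppow_plus_1 by (simp add: divide_divide_eq_left mult.commute)
  have "\<lfloor>s / real p powi (k + 1)\<rfloor> = \<lfloor>s / real p powi k\<rfloor> div int p"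
    unfolding e by (rule floor_divide_real_eq_div) simp
  moreover have "int (pdigit p s k) = \<lfloor>s / real p powi k\<rfloor> mod int p"
    unfolding pdigit_def using p_ge_2 by simp
  ultimately show ?thesis by simp
qed

lemma floor_div_ppow_expansion:
  assumes "L \<le> k"
  shows "of_int \<lfloor>s / real p powi L\<rfloor> * real p powi L =
     (\<Sum>j\<in>{L..<k}. real (pdigit p s j) * real p powi j) + of_int \<lfloor>s / real p powi k\<rfloor> * real p powi k"
  using assms
proof (induction k rule: int_ge_induct)
  case (step k)
  have "{L..<k + 1} = insert k {L..<k}" using step by auto
  moreover have "of_int \<lfloor>s / real p powi k\<rfloor> * real p powi k =
     real (pdigit p s k) * real p powi k + of_int \<lfloor>s / real p powi (k + 1)\<rfloor> * real p powi (k + 1)"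
    by (subst floor_div_ppow_step) (simp add: ppow_plus_1 algebra_simps)
  ultimately show ?case using step by simp
qed simp

lemma pmultiple_floor: "pmultiple p r e \<Longrightarrow> of_int \<lfloor>r / real p powi e\<rfloor> * real p powi e = r"
  unfolding pmultiple_def using ppow_nonzero by auto

lemma pmultiple_add: "pmultiple p r e \<Longrightarrow> pmultiple p s e \<Longrightarrow> pmultiple p (r + s) e"
  unfolding pmultiple_def
proof (elim exE)
  fix n m assume "r = of_int n * real p powi e" "s = of_int m * real p powi e"
  then show "\<exists>k::int. r + s = of_int k * real p powi e"
    by (intro exI[of _ "n + m"]) (simp add: distrib_right)
qed

lemma pmultiple_uminus: "pmultiple p r e \<Longrightarrow> pmultiple p (- r) e"
  unfolding pmultiple_def
proof (elim exE)
  fix n assume "r = of_int n * real p powi e"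
  then show "\<exists>k::int. - r = of_int k * real p powi e" by (intro exI[of _ "- n"]) simp
qed

lemma pmultiple_diff: "pmultiple p r e \<Longrightarrow> pmultiple p s e \<Longrightarrow> pmultiple p (r - s) e"
  using pmultiple_add[of r e "- s"] pmultiple_uminus[of s e] by simp

lemma pmultiple_mult: "pmultiple p r e \<Longrightarrow> pmultiple p s f \<Longrightarrow> pmultiple p (r * s) (e + f)"
  unfolding pmultiple_def
proof (elim exE)
  fix n m assume "r = of_int n * real p powi e" "s = of_int m * real p powi f"
  then show "\<exists>k::int. r * s = of_int k * real p powi (e + f)"
    by (intro exI[of _ "n * m"]) (simp add: ppow_add)
qed

lemma pmultiple_mono:
  assumes "e \<le> f" "pmultiple p r f"
  shows "pmultiple p r e"
proof -
  obtain n where n: "r = of_int n * real p powi f" using assms unfolding pmultiple_def by auto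
  have "real p powi f = real p ^ nat (f - e) * real p powi e"
    using ppow_add[of "f - e" e] assms(1) by (simp add: power_int_def)
  then show ?thesis unfolding pmultiple_def n
    by (intro exI[of _ "n * int p ^ nat (f - e)"]) simp
qed

lemma pmultiple_zero [simp]: "pmultiple p 0 e"
  unfolding pmultiple_def by (rule exI[of _ 0]) simp

lemma pmultiple_sum:
  "finite S \<Longrightarrow> (\<And>i. i \<in> S \<Longrightarrow> pmultiple p (f i) e) \<Longrightarrow> pmultiple p (\<Sum>i\<in>S. f i) e"
  by (induction S rule: finite_induct) (auto intro: pmultiple_add)

lemma pmultiple_digit: "pmultiple p (real n * real p powi j) j"
  unfolding pmultiple_def by (intro exI[of _ "int n"]) simp

lemma pmultiple_0_Ints: "pmultiple p r 0 \<Longrightarrow> r \<in> \<int>"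
  unfolding pmultiple_def by auto

lemma pdigit_eq_if_diff_pmultiple:
  assumes "pmultiple p (r - r') (k + 1)"
  shows "pdigit p r k = pdigit p r' k"
proof -
  obtain n where "r - r' = of_int n * real p powi (k + 1)" using assms unfolding pmultiple_def by auto
  then have e: "r / real p powi k = r' / real p powi k + of_int (n * int p)"
    using ppow_nonzero ppow_plus_1 by (simp add: field_simps)
  have "\<lfloor>r / real p powi k\<rfloor> = \<lfloor>r' / real p powi k\<rfloor> + n * int p"
    unfolding e by (rule floor_add_int[symmetric])
  then show ?thesis unfolding pdigit_def by simp
qed

lemma pdigit_zero [simp]: "pdigit p 0 k = 0"
  unfolding pdigit_def by simp

lemma pdigit_eq_0_if_pmultiple:
  assumes "pmultiple p s L" "j < L"
  shows "pdigit p s j = 0"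
proof -
  have "pmultiple p (s - 0) (j + 1)" using assms by (intro pmultiple_mono[of "j + 1" L]) auto
  then have "pdigit p s j = pdigit p 0 j" by (rule pdigit_eq_if_diff_pmultiple)
  then show ?thesis by simp
qed

lemma pdigit_less: "pdigit p s k < p"
  unfolding pdigit_def using p_ge_2 by (simp add: nat_less_iff)

lemma digit_sum_empty: "k \<le> L \<Longrightarrow> digit_sum p x L k = 0"
  unfolding digit_sum_def by simp

lemma digit_sum_split:
  "L \<le> m \<Longrightarrow> m \<le> k \<Longrightarrow> digit_sum p x L k = digit_sum p x L m + digit_sum p x m k"
proof -
  assume "L \<le> m" "m \<le> k"
  then have "{L..<k} = {L..<m} \<union> {m..<k}" by auto
  then show ?thesis unfolding digit_sum_def by (simp add: sum.union_disjoint ivl_disj_int_two(3))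
qed

lemma digit_sum_plus_1:
  "L \<le> k \<Longrightarrow> digit_sum p x L (k + 1) = digit_sum p x L k + real (x k) * real p powi k"
proof -
  assume "L \<le> k"
  then have "{L..<k + 1} = insert k {L..<k}" by auto
  then show ?thesis unfolding digit_sum_def by simp
qed

lemma digit_sum_nonneg: "0 \<le> digit_sum p x L k"
  unfolding digit_sum_def by (intro sum_nonneg) simp

lemma digit_sum_less_ppow:
  assumes "\<forall>j. x j < p"
  shows "digit_sum p x L k < real p powi k"
proof (cases "L \<le> k")
  case True
  have "digit_sum p x L k \<le> real p powi k - real p powi L"
    using True
  proof (induction k rule: int_ge_induct)
    case (step k)
    have "x k + 1 \<le> p" using assms by (simp add: Suc_le_eq)
    then have "real (x k) \<le> real p - 1" by linarith
    then have "real (x k) * real p powi k \<le> (real p - 1) * real p powi k"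
      using ppow_pos by (intro mult_right_mono) auto
    then show ?case using step digit_sum_plus_1[OF step(1)] by (simp add: ppow_plus_1 algebra_simps)
  qed (simp add: digit_sum_empty)
  then show ?thesis using ppow_pos[of L] by simp
qed (use digit_sum_empty ppow_pos in simp)

lemma pmultiple_digit_sum: "pmultiple p (digit_sum p x L k) L"
  unfolding digit_sum_def
  by (rule pmultiple_sum) (auto intro: pmultiple_mono[OF _ pmultiple_digit])

lemma pdigit_digit_sum:
  assumes "\<forall>j. x j < p" "L \<le> k"
  shows "pdigit p (digit_sum p x L (k + 1)) k = x k"
proof -
  have "digit_sum p x L (k + 1) / real p powi k = real (x k) + digit_sum p x L k / real p powi k"
    using digit_sum_plus_1[OF assms(2)] ppow_nonzero by (simp add: field_simps)
  moreover have "0 \<le> digit_sum p x L k / real p powi k" "digit_sum p x L k / real p powi k < 1"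
    using digit_sum_nonneg digit_sum_less_ppow[OF assms(1)] ppow_pos by (auto simp: divide_simps)
  ultimately have "\<lfloor>digit_sum p x L (k + 1) / real p powi k\<rfloor> = int (x k)"
    by (simp add: floor_eq_iff)
  then show ?thesis unfolding pdigit_def using assms(1) by simp
qed

lemma digit_sum_vanish: "\<forall>j<L. x j = 0 \<Longrightarrow> k \<le> L \<Longrightarrow> digit_sum p x L' k = 0"
  unfolding digit_sum_def by (intro sum.neutral) auto

lemma Qp_vanish_below: "x \<in> Qp p \<Longrightarrow> \<exists>L. \<forall>j<L. x j = 0"
  unfolding Qp_def by auto

lemma Qp_digit_less: "x \<in> Qp p \<Longrightarrow> x j < p"
  unfolding Qp_def by auto

lemma Qp_vanish_below2:
  assumes "x \<in> Qp p" "y \<in> Qp p"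
  obtains L where "\<forall>j<L. x j = 0" "\<forall>j<L. y j = 0"
proof -
  obtain L1 L2 where "\<forall>j<L1. x j = 0" "\<forall>j<L2. y j = 0"
    using Qp_vanish_below assms by metis
  then show ?thesis by (intro that[of "min L1 L2"]) auto
qed

lemma QpI:
  assumes "\<forall>j<L. x j = 0" "\<forall>j. x j < p"
  shows "x \<in> Qp p"
  unfolding Qp_def using assms by auto

lemma pzero_Qp: "pzero \<in> Qp p"
  unfolding Qp_def pzero_def using p_ge_2 by auto

lemma fun_upd_Qp: "y \<in> Qp p \<Longrightarrow> e < p \<Longrightarrow> y(M := e) \<in> Qp p"
  using Qp_vanish_below[of y] Qp_digit_less[of y]
  by (auto intro!: QpI[where L = "min _ M"])

lemma ptrunc_eq_digit_sum:
  assumes "\<forall>j<L. x j = 0"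
  shows "ptrunc p x k = digit_sum p x L k"
proof -
  have "{j. j < k \<and> x j \<noteq> 0} \<subseteq> {L..<k}" using assms by (auto simp: not_less)
  then show ?thesis unfolding ptrunc_def digit_sum_def by (intro sum.mono_neutral_left) auto
qed

lemma pdigit_ptrunc:
  assumes "x \<in> Qp p"
  shows "pdigit p (ptrunc p x (k + 1)) k = x k"
proof -
  obtain L where L: "\<forall>j<L. x j = 0" using Qp_vanish_below assms by blast
  show ?thesis
  proof (cases "L \<le> k")
    case True
    then show ?thesis using ptrunc_eq_digit_sum[OF L] pdigit_digit_sum Qp_digit_less[OF assms] by simp
  next
    case False
    then show ?thesis using ptrunc_eq_digit_sum[OF L] digit_sum_empty[of "k + 1" L x] L by simp
  qed
qed

lemma padd_disjoint_digits:
  assumes "x \<in> Qp p" "y \<in> Qp p" "\<forall>j. x j = 0 \<or> y j = 0"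
  shows "padd p x y = (\<lambda>j. x j + y j)" and "(\<lambda>j. x j + y j) \<in> Qp p"
proof -
  obtain L where L: "\<forall>j<L. x j = 0" "\<forall>j<L. y j = 0" using Qp_vanish_below2 assms by blast
  let ?z = "\<lambda>j. x j + y j"
  have "x j + y j < p" for j
    using assms(3)[rule_format, of j] Qp_digit_less[OF assms(1), of j] Qp_digit_less[OF assms(2), of j]
    by auto
  then show zq: "?z \<in> Qp p" using L by (intro QpI[of L]) auto
  have zL: "\<forall>j<L. ?z j = 0" using L by simp
  show "padd p x y = ?z"
  proof
    fix k
    have "ptrunc p x (k + 1) + ptrunc p y (k + 1) = ptrunc p ?z (k + 1)"
      unfolding ptrunc_eq_digit_sum[OF L(1)] ptrunc_eq_digit_sum[OF L(2)] ptrunc_eq_digit_sum[OF zL]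
      by (simp add: digit_sum_def sum.distrib[symmetric] algebra_simps)
    then show "padd p x y k = ?z k" unfolding padd_def using pdigit_ptrunc[OF zq] by simp
  qed
qed

end

context padic
begin

section \<open>Valuation, absolute value and distance\<close>

lemma pval_eqI:
  assumes "y j \<noteq> 0" "\<forall>i<j. y i = 0"
  shows "y \<noteq> pzero" "pval y = j"
proof -
  show nz: "y \<noteq> pzero" using assms(1) unfolding pzero_def by auto
  have "(LEAST k. y k \<noteq> 0) = j"
    using assms by (intro Least_equality) (auto simp: not_less[symmetric])
  then show "pval y = j" using nz unfolding pval_def by simp
qed

lemma pabs_eqI:
  assumes "y j \<noteq> 0" "\<forall>i<j. y i = 0"
  shows "pabs p y = real p powi (- j)"
  using pval_eqI[OF assms] unfolding pabs_def by simp

lemma Qp_first_nonzero_digit: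
  assumes "y \<in> Qp p" "y \<noteq> pzero"
  obtains j where "y j \<noteq> 0" "\<forall>i<j. y i = 0"
proof -
  obtain j0 where "y j0 \<noteq> 0" using assms(2) unfolding pzero_def by auto
  moreover obtain L where "\<forall>j<L. y j = 0" using Qp_vanish_below[OF assms(1)] by blast
  ultimately show ?thesis using int_exists_least[of "\<lambda>j. y j \<noteq> 0" j0 L] that by auto
qed

lemma pval_digit_nonzero:
  assumes "y \<in> Qp p" "y \<noteq> pzero"
  shows "y (pval y) \<noteq> 0"
proof -
  obtain j where "y j \<noteq> 0" "\<forall>i<j. y i = 0" using Qp_first_nonzero_digit assms by blast
  then show ?thesis using pval_eqI(2) by simp
qed

lemma Qp_vanish_below_pval:
  assumes "z \<in> Qp p"
  shows "\<forall>j<pval z. z j = 0"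
proof (cases "z = pzero")
  case False
  then obtain j where "z j \<noteq> 0" "\<forall>i<j. z i = 0" using Qp_first_nonzero_digit assms by blast
  then show ?thesis using pval_eqI(2) by simp
qed (simp add: pzero_def)

lemma pabs_eq_ppow: "y \<in> Qp p \<Longrightarrow> y \<noteq> pzero \<Longrightarrow> pabs p y = real p powi (- pval y)"
  unfolding pabs_def by simp

lemma pabs_pzero [simp]: "pabs p pzero = 0"
  unfolding pabs_def by simp

lemma pabs_nonneg: "0 \<le> pabs p y"
  unfolding pabs_def using ppow_pos by (simp add: less_imp_le)

lemma pabs_le_ppow_iff:
  assumes "y \<in> Qp p"
  shows "pabs p y \<le> real p powi (- M) \<longleftrightarrow> (\<forall>j<M. y j = 0)"
proof (cases "y = pzero")
  case True
  have "pabs p y = 0" using True by simp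
  moreover have "\<forall>j<M. y j = 0" using True by (simp add: pzero_def)
  ultimately
  show ?thesis using ppow_pos[of "- M"] by simp
next
  case False
  then obtain j where j: "y j \<noteq> 0" "\<forall>i<j. y i = 0" using Qp_first_nonzero_digit assms by blast
  have "(\<forall>i<M. y i = 0) \<longleftrightarrow> M \<le> j"
  proof
    show "\<forall>i<M. y i = 0 \<Longrightarrow> M \<le> j" using j(1) by (meson not_le)
    show "M \<le> j \<Longrightarrow> \<forall>i<M. y i = 0" using j(2) by simp
  qed
  then show ?thesis unfolding pabs_eqI[OF j] ppow_le_iff by simp
qed

lemma pneg_vanish_below:
  assumes "\<forall>j<L. c j = 0"
  shows "\<forall>j<L. pneg p c j = 0"
proof (intro allI impI)
  fix j assume "j < L"
  then have "ptrunc p c (j + 1) = 0" using ptrunc_eq_digit_sum[OF assms] digit_sum_vanish[OF assms] by simp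
  then show "pneg p c j = 0" unfolding pneg_def by simp
qed

lemma pneg_Qp:
  assumes "c \<in> Qp p"
  shows "pneg p c \<in> Qp p"
proof -
  obtain L where "\<forall>j<L. c j = 0" using Qp_vanish_below[OF assms] by blast
  then show ?thesis using pneg_vanish_below pdigit_less
    by (intro QpI[of L]) (auto simp: pneg_def)
qed

lemma padd_Qp:
  assumes "x \<in> Qp p" "y \<in> Qp p"
  shows "padd p x y \<in> Qp p"
proof -
  obtain L where L: "\<forall>j<L. x j = 0" "\<forall>j<L. y j = 0" using Qp_vanish_below2[OF assms] by metis
  have "ptrunc p x (k + 1) = 0" "ptrunc p y (k + 1) = 0" if "k < L" for k
    using ptrunc_eq_digit_sum[OF L(1)] ptrunc_eq_digit_sum[OF L(2)]
      digit_sum_vanish[OF L(1)] digit_sum_vanish[OF L(2)] that by auto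
  then show ?thesis using pdigit_less by (intro QpI[of L]) (auto simp: padd_def)
qed

lemma psub_Qp: "x \<in> Qp p \<Longrightarrow> c \<in> Qp p \<Longrightarrow> psub p x c \<in> Qp p"
  unfolding psub_def using padd_Qp pneg_Qp by blast

lemma pmultiple_ptrunc_pneg_add:
  assumes "c \<in> Qp p"
  shows "pmultiple p (ptrunc p (pneg p c) (k + 1) + ptrunc p c (k + 1)) (k + 1)"
proof -
  obtain L where L: "\<forall>j<L. c j = 0" using Qp_vanish_below[OF assms] by blast
  have L': "\<forall>j<L. pneg p c j = 0" using pneg_vanish_below[OF L] .
  show ?thesis
  proof (cases "L \<le> k")
    case False
    then show ?thesis using ptrunc_eq_digit_sum[OF L] ptrunc_eq_digit_sum[OF L']
        digit_sum_vanish[OF L] digit_sum_vanish[OF L'] by simp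
  next
    case True
    define s where "s = - digit_sum p c L (k + 1)"
    have "ptrunc p (pneg p c) (k + 1) = (\<Sum>j\<in>{L..<k + 1}. real (pneg p c j) * real p powi j)"
      unfolding ptrunc_eq_digit_sum[OF L'] digit_sum_def ..
    also have "\<dots> = (\<Sum>j\<in>{L..<k + 1}. real (pdigit p s j) * real p powi j)"
    proof (rule sum.cong[OF refl])
      fix j assume j: "j \<in> {L..<k + 1}"
      have "digit_sum p c L (k + 1) = digit_sum p c L (j + 1) + digit_sum p c (j + 1) (k + 1)"
        using j by (intro digit_sum_split) auto
      then have "pmultiple p (- ptrunc p c (j + 1) - s) (j + 1)"
        unfolding s_def ptrunc_eq_digit_sum[OF L] by (simp add: pmultiple_digit_sum)
      then have "pdigit p (- ptrunc p c (j + 1)) j = pdigit p s j" by (rule pdigit_eq_if_diff_pmultiple)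
      then show "real (pneg p c j) * real p powi j = real (pdigit p s j) * real p powi j"
        unfolding pneg_def by simp
    qed
    also have "\<dots> = s - of_int \<lfloor>s / real p powi (k + 1)\<rfloor> * real p powi (k + 1)"
      using floor_div_ppow_expansion[of L "k + 1" s] True
        pmultiple_floor[OF pmultiple_uminus[OF pmultiple_digit_sum], of c L "k + 1"]
      unfolding s_def by simp
    finally have "ptrunc p (pneg p c) (k + 1) = s - of_int \<lfloor>s / real p powi (k + 1)\<rfloor> * real p powi (k + 1)" .
    moreover have "ptrunc p c (k + 1) = - s" unfolding s_def ptrunc_eq_digit_sum[OF L] by simp
    ultimately show ?thesis unfolding pmultiple_def
      by (intro exI[of _ "- \<lfloor>s / real p powi (k + 1)\<rfloor>"]) simp
  qed
qed

lemma psub_digit: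
  assumes "c \<in> Qp p"
  shows "psub p x c k = pdigit p (ptrunc p x (k + 1) - ptrunc p c (k + 1)) k"
  unfolding psub_def padd_def using pmultiple_ptrunc_pneg_add[OF assms, of k]
  by (intro pdigit_eq_if_diff_pmultiple) (simp add: algebra_simps)

lemma ptrunc_eq_if_agree:
  assumes "x \<in> Qp p" "c \<in> Qp p" "digits_agree k x c"
  shows "ptrunc p x k = ptrunc p c k"
proof -
  obtain L where L: "\<forall>j<L. x j = 0" "\<forall>j<L. c j = 0" using Qp_vanish_below2[OF assms(1,2)] by metis
  show ?thesis unfolding ptrunc_eq_digit_sum[OF L(1)] ptrunc_eq_digit_sum[OF L(2)] digit_sum_def
    using assms(3) unfolding digits_agree_def by (intro sum.cong) auto
qed

lemma psub_digit_zero_if_agree: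
  assumes "x \<in> Qp p" "c \<in> Qp p" "digits_agree (k + 1) x c"
  shows "psub p x c k = 0"
  unfolding psub_digit[OF assms(2)] ptrunc_eq_if_agree[OF assms] by simp

lemma psub_digit_first_diff:
  assumes "x \<in> Qp p" "c \<in> Qp p" "\<forall>j<k. x j = c j" "x k \<noteq> c k"
  shows "psub p x c k \<noteq> 0"
proof -
  obtain L where L: "\<forall>j<L. x j = 0" "\<forall>j<L. c j = 0" using Qp_vanish_below2[OF assms(1,2)] by metis
  have Lk: "L \<le> k" by (rule ccontr) (use L assms(4) in auto)
  have eq: "digit_sum p x L k = digit_sum p c L k"
    unfolding digit_sum_def using assms(3) by (intro sum.cong) auto
  have "ptrunc p x (k + 1) - ptrunc p c (k + 1) = (real (x k) - real (c k)) * real p powi k"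
    unfolding ptrunc_eq_digit_sum[OF L(1)] ptrunc_eq_digit_sum[OF L(2)] digit_sum_plus_1[OF Lk] eq
    by (simp add: algebra_simps)
  then have "(ptrunc p x (k + 1) - ptrunc p c (k + 1)) / real p powi k = of_int (int (x k) - int (c k))"
    using ppow_nonzero by simp
  then have fl: "\<lfloor>(ptrunc p x (k + 1) - ptrunc p c (k + 1)) / real p powi k\<rfloor> = int (x k) - int (c k)"
    by (metis floor_of_int)
  have "\<not> int p dvd (int (x k) - int (c k))"
  proof
    assume "int p dvd (int (x k) - int (c k))"
    moreover have "int (x k) - int (c k) \<noteq> 0" using assms(4) by simp
    ultimately have "\<bar>int p\<bar> \<le> \<bar>int (x k) - int (c k)\<bar>" by (rule dvd_imp_le_int[rotated])
    then show False using Qp_digit_less[OF assms(1), of k] Qp_digit_less[OF assms(2), of k] by linarith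
  qed
  then have "(int (x k) - int (c k)) mod int p \<noteq> 0" by (simp add: mod_eq_0_iff_dvd)
  moreover have "0 \<le> (int (x k) - int (c k)) mod int p" using p_ge_2 by simp
  ultimately show ?thesis unfolding psub_digit[OF assms(2)] pdigit_def fl by simp
qed

lemma Qp_first_diff_digit:
  assumes "x \<in> Qp p" "c \<in> Qp p" "x \<noteq> c"
  obtains j where "x j \<noteq> c j" "\<forall>i<j. x i = c i"
proof -
  obtain j0 where "x j0 \<noteq> c j0" using assms(3) by auto
  moreover obtain L where "\<forall>j<L. x j = 0" "\<forall>j<L. c j = 0" using Qp_vanish_below2[OF assms(1,2)] by metis
  ultimately show ?thesis using int_exists_least[of "\<lambda>j. x j \<noteq> c j" j0 L] that by auto
qed

lemma digits_agree_iff_le: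
  assumes "x j \<noteq> c j" "\<forall>i<j. x i = c i"
  shows "digits_agree M x c \<longleftrightarrow> M \<le> j"
  unfolding digits_agree_def
proof
  show "\<forall>i<M. x i = c i \<Longrightarrow> M \<le> j" using assms(1) by (meson not_le)
  show "M \<le> j \<Longrightarrow> \<forall>i<M. x i = c i" using assms(2) by simp
qed

lemma psub_self:
  assumes "x \<in> Qp p"
  shows "psub p x x = pzero"
  unfolding pzero_def by (rule ext) (simp add: psub_digit[OF assms])

lemma psub_first_diff:
  assumes "x \<in> Qp p" "c \<in> Qp p" "x j \<noteq> c j" "\<forall>i<j. x i = c i"
  shows "psub p x c \<noteq> pzero" "pval (psub p x c) = j" "pdist p x c = real p powi (- j)"
proof -
  have a: "psub p x c j \<noteq> 0" using psub_digit_first_diff assms by blast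
  have b: "\<forall>i<j. psub p x c i = 0"
    using assms(4) by (auto intro!: psub_digit_zero_if_agree[OF assms(1,2)] simp: digits_agree_def)
  show "psub p x c \<noteq> pzero" "pval (psub p x c) = j" using pval_eqI[OF a b] by auto
  show "pdist p x c = real p powi (- j)" unfolding pdist_def using pabs_eqI[OF a b] .
qed

lemma digits_agree_if_pdist_less:
  assumes "x \<in> Qp p" "c \<in> Qp p" "pdist p x c < real p powi (- (M - 1))"
  shows "digits_agree M x c"
proof (cases "x = c")
  case False
  then obtain j where j: "x j \<noteq> c j" "\<forall>i<j. x i = c i" using Qp_first_diff_digit assms by blast
  have "M \<le> j" using assms(3) unfolding psub_first_diff(3)[OF assms(1,2) j] ppow_less_iff by simp
  then show ?thesis unfolding digits_agree_def using j by auto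
qed (simp add: digits_agree_def)

lemma pabs_le_max_if_agree:
  assumes "y \<in> Qp p" "x \<in> Qp p" "digits_agree M y x"
  shows "pabs p y \<le> max (pabs p x) (real p powi (- M))"
proof (cases "\<forall>j<M. x j = 0")
  case True
  then have "pabs p y \<le> real p powi (- M)"
    using assms(3) pabs_le_ppow_iff[OF assms(1)] unfolding digits_agree_def by simp
  then show ?thesis by simp
next
  case False
  then have "x \<noteq> pzero" unfolding pzero_def by auto
  then obtain j where j: "x j \<noteq> 0" "\<forall>i<j. x i = 0" using Qp_first_nonzero_digit[OF assms(2)] by blast
  have "j < M" using False j by (meson not_le order_less_le_trans)
  then have "y j \<noteq> 0" "\<forall>i<j. y i = 0" using j assms(3) unfolding digits_agree_def by auto
  then have "pabs p y = pabs p x" using pabs_eqI j by metis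
  then show ?thesis by simp
qed

end

section \<open>Balls and Haar measure\<close>

definition pball :: "nat \<Rightarrow> (int \<Rightarrow> nat) \<Rightarrow> int \<Rightarrow> (int \<Rightarrow> nat) set" where
  "pball p c M = {y \<in> Qp p. digits_agree M y c}"

context padic
begin

lemma pball_pzero_iff:
  assumes "y \<in> Qp p"
  shows "y \<in> pball p pzero M \<longleftrightarrow> y = pzero \<or> M \<le> pval y"
proof (cases "y = pzero")
  case False
  obtain j where j: "y j \<noteq> 0" "\<forall>i<j. y i = 0" using Qp_first_nonzero_digit assms False by blast
  have "(\<forall>i<M. y i = 0) \<longleftrightarrow> M \<le> j"
  proof
    show "\<forall>i<M. y i = 0 \<Longrightarrow> M \<le> j" using j(1) by (meson not_le)
    show "M \<le> j \<Longrightarrow> \<forall>i<M. y i = 0" using j(2) by simp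
  qed
  then show ?thesis using assms False pval_eqI[OF j] by (simp add: pball_def digits_agree_def pzero_def)
qed (use assms in \<open>simp add: pball_def digits_agree_def\<close>)

lemma pabs_le_ppow_iff_pball: "pabs p y \<le> real p powi (- M) \<longleftrightarrow> y \<in> pball p pzero M" if "y \<in> Qp p"
  using pabs_le_ppow_iff[OF that] that by (simp add: pball_def digits_agree_def pzero_def)

lemma padic_borelI_ball_nhds:
  assumes "U \<subseteq> Qp p" "\<forall>x\<in>U. \<exists>M. pball p x M \<subseteq> U"
  shows "U \<in> padic_borel p"
proof -
  have "padic_open p U" unfolding padic_open_def
  proof (intro conjI ballI)
    fix x assume x: "x \<in> U"
    then obtain M where M: "pball p x M \<subseteq> U" using assms(2) by blast
    have xq: "x \<in> Qp p" using x assms(1) by auto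
    have "{y \<in> Qp p. pdist p y x < real p powi (- (M - 1))} \<subseteq> U"
      using M digits_agree_if_pdist_less[OF _ xq] unfolding pball_def by blast
    then show "\<exists>r>0. {y \<in> Qp p. pdist p y x < r} \<subseteq> U" using ppow_pos by blast
  qed (rule assms(1))
  then show ?thesis unfolding padic_borel_def by (intro sigma_sets.Basic) simp
qed

lemma pball_borel [simp]: "pball p c M \<in> padic_borel p"
  by (rule padic_borelI_ball_nhds) (auto simp: pball_def digits_agree_def intro!: exI[of _ M])

lemma digit_set_borel: "{y \<in> Qp p. y j = e} \<in> padic_borel p"
  by (rule padic_borelI_ball_nhds) (auto simp: pball_def digits_agree_def intro!: exI[of _ "j + 1"])

lemma pball_antimono: "N \<le> M \<Longrightarrow> pball p c M \<subseteq> pball p c N"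
  unfolding pball_def digits_agree_def by auto

lemma pball_recentre: "x \<in> pball p c M \<Longrightarrow> pball p x M = pball p c M"
  unfolding pball_def digits_agree_def by auto

lemma pball_truncate: "pball p c M = pball p (\<lambda>j. if j < M then c j else 0) M"
  unfolding pball_def digits_agree_def by auto

lemma Qp_truncate:
  assumes "c \<in> Qp p"
  shows "(\<lambda>j. if j < M then c j else 0) \<in> Qp p"
proof -
  obtain L where "\<forall>j<L. c j = 0" using Qp_vanish_below[OF assms] by blast
  then show ?thesis using Qp_digit_less[OF assms] p_ge_2 by (intro QpI[of L]) auto
qed

text \<open>The translation involves no carries.\<close>

lemma pball_eq_translate:
  assumes d: "d \<in> Qp p" "\<forall>j\<ge>M. d j = 0"
  shows "pball p d M = padd p d ` pball p pzero M"
proof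
  show "padd p d ` pball p pzero M \<subseteq> pball p d M"
  proof
    fix x assume "x \<in> padd p d ` pball p pzero M"
    then obtain y where y: "y \<in> pball p pzero M" "x = padd p d y" by auto
    have yq: "y \<in> Qp p" and y0: "\<forall>j<M. y j = 0"
      using y unfolding pball_def digits_agree_def pzero_def by auto
    have "\<forall>j. d j = 0 \<or> y j = 0" using d(2) y0 by (meson not_le)
    from padd_disjoint_digits[OF d(1) yq this] y(2) y0
    show "x \<in> pball p d M" unfolding pball_def digits_agree_def by simp
  qed
next
  show "pball p d M \<subseteq> padd p d ` pball p pzero M"
  proof
    fix x assume x: "x \<in> pball p d M"
    then have xq: "x \<in> Qp p" and xa: "\<forall>j<M. x j = d j" unfolding pball_def digits_agree_def by auto
    define y where "y = (\<lambda>j. if j < M then 0 else x j)"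
    have yq: "y \<in> Qp p"
      unfolding y_def using Qp_digit_less[OF xq] p_ge_2 by (intro QpI[of M]) auto
    have "\<forall>j. d j = 0 \<or> y j = 0" using d(2) unfolding y_def by (meson not_le)
    then have "padd p d y = (\<lambda>j. d j + y j)" using padd_disjoint_digits[OF d(1) yq] by blast
    also have "\<dots> = x" unfolding y_def using xa d(2) by (auto simp: not_less)
    finally have "x = padd p d y" by simp
    moreover have "y \<in> pball p pzero M" unfolding pball_def digits_agree_def pzero_def y_def using yq y_def by simp
    ultimately show "x \<in> padd p d ` pball p pzero M" by blast
  qed
qed

lemma pball_split_digit: "pball p c M = (\<Union>e<p. pball p (c(M := e)) (M + 1))"
proof
  show "pball p c M \<subseteq> (\<Union>e<p. pball p (c(M := e)) (M + 1))"
  proof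
    fix y assume y: "y \<in> pball p c M"
    then have "y M < p" unfolding pball_def using Qp_digit_less by auto
    moreover have "y \<in> pball p (c(M := y M)) (M + 1)" using y unfolding pball_def digits_agree_def by auto
    ultimately show "y \<in> (\<Union>e<p. pball p (c(M := e)) (M + 1))" by blast
  qed
qed (auto simp: pball_def digits_agree_def)

lemma disjoint_family_pball_split_digit: "disjoint_family_on (\<lambda>e. pball p (c(M := e)) (M + 1)) S"
  unfolding disjoint_family_on_def pball_def digits_agree_def by auto

lemma pball_subset_pball_pzero: "c \<in> pball p pzero A \<Longrightarrow> pball p c (A + int i) \<subseteq> pball p pzero A"
  unfolding pball_def digits_agree_def by auto

lemma pabs_less_borel:
  "{w \<in> Qp p. pabs p w < a} \<in> padic_borel p"
proof (cases "0 < a")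
  case False
  then have e: "{w \<in> Qp p. pabs p w < a} = {}"
    using pabs_nonneg by (auto simp: not_less intro: order_trans)
  show ?thesis unfolding e padic_borel_def by (rule sigma_sets.Empty)
next
  case True
  obtain n where n: "(1 / real p) ^ n < a" using real_arch_pow_inv[OF True, of "1 / real p"] p_gt_1 by auto
  show ?thesis
  proof (rule padic_borelI_ball_nhds)
    show "\<forall>x\<in>{w \<in> Qp p. pabs p w < a}. \<exists>M. pball p x M \<subseteq> {w \<in> Qp p. pabs p w < a}"
    proof (intro ballI exI[of _ "int n"] subsetI)
      fix x y assume x: "x \<in> {w \<in> Qp p. pabs p w < a}" and y: "y \<in> pball p x (int n)"
      have "pabs p y \<le> max (pabs p x) (real p powi (- int n))"
        using y x by (intro pabs_le_max_if_agree) (auto simp: pball_def)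
      then show "y \<in> {w \<in> Qp p. pabs p w < a}" using x y n by (auto simp: pball_def ppow_minus_nat)
    qed
  qed auto
qed

end

locale padic_haar = padic +
  fixes \<mu> :: "(int \<Rightarrow> nat) measure"
  assumes haar: "is_haar p \<mu>"
begin

lemma space_haar [simp]: "space \<mu> = Qp p" using haar unfolding is_haar_def by simp
lemma sets_haar [simp]: "sets \<mu> = padic_borel p" using haar unfolding is_haar_def by simp

lemma emeasure_translate: "a \<in> Qp p \<Longrightarrow> A \<in> sets \<mu> \<Longrightarrow> emeasure \<mu> (padd p a ` A) = emeasure \<mu> A"
  using haar unfolding is_haar_def by blast

lemma pball_sets [measurable]: "pball p c M \<in> sets \<mu>"
  by simp

lemma pabs_borel_measurable [measurable]: "pabs p \<in> borel_measurable \<mu>"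
  by (rule borel_measurableI_less) (simp add: Collect_conj_eq[symmetric] pabs_less_borel)

lemma emeasure_pball_eq_pzero:
  assumes "c \<in> Qp p"
  shows "emeasure \<mu> (pball p c M) = emeasure \<mu> (pball p pzero M)"
proof -
  let ?d = "\<lambda>j. if j < M then c j else 0"
  have "pball p c M = padd p ?d ` pball p pzero M"
    unfolding pball_truncate[of c] by (rule pball_eq_translate) (auto intro: Qp_truncate[OF assms])
  then show ?thesis using emeasure_translate[OF Qp_truncate[OF assms, of M] pball_sets] by simp
qed

lemma emeasure_pball_pzero_step:
  "emeasure \<mu> (pball p pzero M) = of_nat p * emeasure \<mu> (pball p pzero (M + 1))"
proof -
  have "emeasure \<mu> (pball p pzero M) = (\<Sum>e<p. emeasure \<mu> (pball p (pzero(M := e)) (M + 1)))"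
    unfolding pball_split_digit[of pzero M]
    by (rule sum_emeasure[symmetric]) (auto intro: disjoint_family_pball_split_digit)
  also have "\<dots> = (\<Sum>e<p. emeasure \<mu> (pball p pzero (M + 1)))"
    using fun_upd_Qp[OF pzero_Qp] by (intro sum.cong refl emeasure_pball_eq_pzero) simp
  finally show ?thesis by simp
qed

lemma emeasure_pball_pzero: "emeasure \<mu> (pball p pzero M) = ennreal (real p powi (- M))"
proof (induction M rule: int_induct[where k = 0])
  case base
  have "pball p pzero 0 = Zp p" unfolding pball_def Zp_def digits_agree_def pzero_def by auto
  then show ?case using haar unfolding is_haar_def by simp
next
  case (step1 i)
  have "of_nat p * ennreal (real p powi (- (i + 1))) = ennreal (real p * real p powi (- (i + 1)))"
    by (simp add: ennreal_mult ennreal_of_nat_eq_real_of_nat ppow_pos less_imp_le)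
  also have "real p * real p powi (- (i + 1)) = real p powi (- i)"
    using ppow_plus_1[of "- (i + 1)"] by simp
  finally have "of_nat p * emeasure \<mu> (pball p pzero (i + 1)) = of_nat p * ennreal (real p powi (- (i + 1)))"
    using emeasure_pball_pzero_step[of i] step1 by simp
  then show ?case using p_ge_2 by (subst (asm) ennreal_mult_cancel_left) auto
next
  case (step2 i)
  have "emeasure \<mu> (pball p pzero (i - 1)) = of_nat p * ennreal (real p powi (- i))"
    using emeasure_pball_pzero_step[of "i - 1"] step2 by simp
  also have "\<dots> = ennreal (real p * real p powi (- i))"
    by (simp add: ennreal_mult ennreal_of_nat_eq_real_of_nat ppow_pos less_imp_le)
  also have "real p * real p powi (- i) = real p powi (- (i - 1))"
    using ppow_plus_1[of "- i"] by simp
  finally show ?case .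
qed

lemma emeasure_pball: "c \<in> Qp p \<Longrightarrow> emeasure \<mu> (pball p c M) = ennreal (real p powi (- M))"
  using emeasure_pball_eq_pzero[of c M] emeasure_pball_pzero[of M] by simp

lemma measure_pball: "c \<in> Qp p \<Longrightarrow> measure \<mu> (pball p c M) = real p powi (- M)"
  using emeasure_pball[of c M] ppow_pos by (simp add: measure_def less_imp_le)

lemma emeasure_pball_finite [simp]: "emeasure \<mu> (pball p c M) < \<top>"
proof (cases "pball p c M = {}")
  case False
  then obtain x where x: "x \<in> pball p c M" by auto
  then have "x \<in> Qp p" unfolding pball_def by simp
  then show ?thesis using emeasure_pball pball_recentre[OF x, symmetric] by simp
qed simp

lemma singleton_null_sets:
  assumes "c \<in> Qp p"
  shows "{c} \<in> null_sets \<mu>"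
proof -
  have "{c} = (\<Inter>n. pball p c (int n))"
  proof
    show "(\<Inter>n. pball p c (int n)) \<subseteq> {c}"
    proof
      fix y assume y: "y \<in> (\<Inter>n. pball p c (int n))"
      have "y j = c j" for j
      proof -
        have "y \<in> pball p c (int (nat (j + 1)))" using y by blast
        then show ?thesis unfolding pball_def digits_agree_def by auto
      qed
      then show "y \<in> {c}" by auto
    qed
  qed (use assms in \<open>auto simp: pball_def digits_agree_def\<close>)
  also have "\<dots> \<in> sets \<mu>" by (intro sets.countable_INT) auto
  finally have meas: "{c} \<in> sets \<mu>" .
  have small: "emeasure \<mu> {c} \<le> ennreal e" if e: "0 < e" for e
  proof -
    obtain n where n: "(1 / real p) ^ n < e" using real_arch_pow_inv[OF e, of "1 / real p"] p_gt_1 by auto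
    have "emeasure \<mu> {c} \<le> emeasure \<mu> (pball p c (int n))"
      using assms by (intro emeasure_mono[OF _ pball_sets]) (auto simp: pball_def digits_agree_def)
    also have "\<dots> = ennreal ((1 / real p) ^ n)" using emeasure_pball[OF assms] by (simp add: ppow_minus_nat)
    also have "\<dots> \<le> ennreal e" using n by (intro ennreal_leI) simp
    finally show ?thesis .
  qed
  have "emeasure \<mu> {c} \<le> 0"
    by (rule ennreal_le_epsilon) (use small in simp)
  then have "emeasure \<mu> {c} = 0" by simp
  then show ?thesis using meas by (simp add: null_sets_def)
qed

lemma sigma_finite_haar: "sigma_finite_measure \<mu>"
proof (rule sigma_finite_measure.intro)
  have "space \<mu> = (\<Union>n. pball p pzero (- int n))"
  proof
    show "space \<mu> \<subseteq> (\<Union>n. pball p pzero (- int n))"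
    proof
      fix x assume "x \<in> space \<mu>"
      then have xq: "x \<in> Qp p" by simp
      obtain L where L: "\<forall>j<L. x j = 0" using Qp_vanish_below[OF xq] by blast
      have "x \<in> pball p pzero (- int (nat (- L)))"
        using xq L unfolding pball_def digits_agree_def pzero_def by auto
      then show "x \<in> (\<Union>n. pball p pzero (- int n))" by blast
    qed
  qed (auto simp: pball_def)
  then show "\<exists>A. countable A \<and> A \<subseteq> sets \<mu> \<and> \<Union> A = space \<mu> \<and> (\<forall>a\<in>A. emeasure \<mu> a \<noteq> \<infinity>)"
    by (intro exI[of _ "range (\<lambda>n. pball p pzero (- int n))"]) (auto simp: less_top)
qed

lemma integral_indicator_const:
  assumes "A \<in> sets \<mu>" "emeasure \<mu> A < \<infinity>"
  shows "(\<integral>y. indicator A y * (k::complex) \<partial>\<mu>) = of_real (measure \<mu> A) * k"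
proof -
  have "(\<lambda>x. indicat_real A x *\<^sub>R k) = (\<lambda>y. indicator A y * k)"
    by (auto simp: indicator_def fun_eq_iff)
  then have "has_bochner_integral \<mu> (\<lambda>y. indicator A y * k) (of_real (measure \<mu> A) * k)"
    using has_bochner_integral_indicator[OF assms, of k] by (simp add: scaleR_conv_of_real)
  then show ?thesis by (rule has_bochner_integral_integral_eq)
qed

lemma integrable_indicator_bounded:
  assumes "A \<in> sets \<mu>" "emeasure \<mu> A < \<infinity>" "f \<in> borel_measurable \<mu>"
    and "\<And>y. y \<in> A \<Longrightarrow> norm (f y) \<le> 1"
  shows "integrable \<mu> (\<lambda>y. indicator A y * (f y :: complex))"
proof (rule Bochner_Integration.integrable_bound[OF integrable_real_indicator[OF assms(1,2)]])
  show "(\<lambda>y. indicator A y * f y) \<in> borel_measurable \<mu>" using assms(1,3) by measurable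
  show "AE x in \<mu>. norm (indicator A x * f x) \<le> norm (indicat_real A x)"
    using assms(4) by (auto simp: indicator_def norm_mult)
qed

lemma borel_measurable_locally_constant:
  fixes f :: "(int \<Rightarrow> nat) \<Rightarrow> 'b::topological_space"
  assumes "\<forall>x\<in>Qp p. \<forall>y\<in>pball p x M. f y = f x"
  shows "f \<in> borel_measurable \<mu>"
proof (rule borel_measurableI)
  fix S :: "'b set" assume "open S"
  have "{y \<in> Qp p. f y \<in> S} \<in> padic_borel p"
    using assms by (intro padic_borelI_ball_nhds) (auto intro!: exI[of _ M] simp: pball_def)
  moreover have "f -` S \<inter> space \<mu> = {y \<in> Qp p. f y \<in> S}" by auto
  ultimately show "f -` S \<inter> space \<mu> \<in> sets \<mu>" by simp
qed

end

section \<open>The additive character\<close>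

definition e2pi :: "real \<Rightarrow> complex" where
  "e2pi r = exp (2 * complex_of_real pi * \<i> * complex_of_real r)"

lemma e2pi_add: "e2pi (a + b) = e2pi a * e2pi b"
  unfolding e2pi_def by (simp add: distrib_left exp_add)

lemma e2pi_Ints: "r \<in> \<int> \<Longrightarrow> e2pi r = 1"
  unfolding e2pi_def using exp_integer_2pi[of r] by (simp add: mult_ac)

lemma e2pi_eq_if_diff_Ints: "r - s \<in> \<int> \<Longrightarrow> e2pi r = e2pi s"
  using e2pi_add[of s "r - s"] e2pi_Ints[of "r - s"] by simp

lemma e2pi_zero [simp]: "e2pi 0 = 1"
  unfolding e2pi_def by simp

lemma norm_e2pi [simp]: "norm (e2pi r) = 1"
  unfolding e2pi_def by (simp add: mult.assoc)

lemma e2pi_of_nat_mult: "e2pi (real n * r) = e2pi r ^ n"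
  unfolding e2pi_def by (simp add: exp_of_nat_mult[symmetric] mult_ac)

lemma e2pi_neq_1: "0 < r \<Longrightarrow> r < 1 \<Longrightarrow> e2pi r \<noteq> 1"
  unfolding e2pi_def exp_eq_1 by auto

lemma sum_e2pi_zero:
  assumes "0 < d" "d < p"
  shows "(\<Sum>e<p. e2pi (real e * real d / real p)) = 0"
proof -
  let ?w = "e2pi (real d / real p)"
  have w1: "?w \<noteq> 1" using assms by (intro e2pi_neq_1) auto
  have "(\<Sum>e<p. e2pi (real e * real d / real p)) = (\<Sum>e<p. ?w ^ e)"
    by (simp add: e2pi_of_nat_mult[symmetric])
  also have "\<dots> = (?w ^ p - 1) / (?w - 1)" using geometric_sum[OF w1] by simp
  also have "?w ^ p = 1" using assms by (simp add: e2pi_of_nat_mult[symmetric] e2pi_Ints)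
  finally show ?thesis by simp
qed

lemma pchi_eq_e2pi: "pchi p x = e2pi (pfrac p x)"
  unfolding pchi_def e2pi_def by simp

context padic
begin

lemma pmultiple_ptrunc_pval: "z \<in> Qp p \<Longrightarrow> pmultiple p (ptrunc p z K) (pval z)"
  using ptrunc_eq_digit_sum[OF Qp_vanish_below_pval] pmultiple_digit_sum by simp

lemma pmultiple_ptrunc_diff:
  assumes "z \<in> Qp p" "K0 \<le> K"
  shows "pmultiple p (ptrunc p z K - ptrunc p z K0) K0"
proof -
  obtain L where "\<forall>j<L. z j = 0" using Qp_vanish_below[OF assms(1)] by blast
  then have L: "\<forall>j<min L K0. z j = 0" by simp
  have "ptrunc p z K - ptrunc p z K0 = digit_sum p z K0 K"
    unfolding ptrunc_eq_digit_sum[OF L] using digit_sum_split[of "min L K0" K0 K z] assms(2) by simp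
  then show ?thesis using pmultiple_digit_sum by simp
qed

lemma pmultiple_ptrunc_diff_if_agree:
  assumes "y \<in> Qp p" "y' \<in> Qp p" "digits_agree M y y'"
  shows "pmultiple p (ptrunc p y K - ptrunc p y' K) M"
proof -
  obtain L where "\<forall>j<L. y j = 0" "\<forall>j<L. y' j = 0" using Qp_vanish_below2[OF assms(1,2)] by metis
  then have L1: "\<forall>j<min L M. y j = 0" and L2: "\<forall>j<min L M. y' j = 0" by auto
  show ?thesis
  proof (cases "K \<le> M")
    case True
    then have "digits_agree K y y'" using assms(3) by (simp add: digits_agree_def)
    then show ?thesis using ptrunc_eq_if_agree[OF assms(1,2)] by simp
  next
    case False
    have e: "digit_sum p y (min L M) M = digit_sum p y' (min L M) M" unfolding digit_sum_def
      using assms(3) unfolding digits_agree_def by (intro sum.cong) auto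
    have "ptrunc p y K - ptrunc p y' K = digit_sum p y M K - digit_sum p y' M K"
      unfolding ptrunc_eq_digit_sum[OF L1] ptrunc_eq_digit_sum[OF L2]
      using digit_sum_split[of "min L M" M K y] digit_sum_split[of "min L M" M K y'] False e by simp
    then show ?thesis using pmultiple_diff[OF pmultiple_digit_sum pmultiple_digit_sum] by simp
  qed
qed

text \<open>For negative k the truncation level used by pmul is K0, so the digits of zy below 0 are
  those of the product of the truncations.\<close>

lemma pchi_pmul_eq_e2pi_min:
  assumes z: "z \<in> Qp p" and y: "y \<in> Qp p"
  defines "K0 \<equiv> max 0 (- pval z) + max 0 (- pval y)"
  shows "pchi p (pmul p z y) = e2pi (ptrunc p z K0 * ptrunc p y K0)"
proof -
  define s where "s = ptrunc p z K0 * ptrunc p y K0"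
  define L where "L = min 0 (pval z + pval y)"
  have pms: "pmultiple p s L" unfolding s_def L_def
    using pmultiple_mono[OF _ pmultiple_mult[OF pmultiple_ptrunc_pval[OF z] pmultiple_ptrunc_pval[OF y]]]
    by simp
  define w where "w = pmul p z y"
  have wj: "w j = pdigit p s j" if "j < 0" for j
  proof -
    have "max (j + 1) 0 = 0" using that by simp
    then show ?thesis unfolding w_def pmul_def s_def K0_def Let_def by simp
  qed
  have wL: "\<forall>j<L. w j = 0" using wj pdigit_eq_0_if_pmultiple[OF pms] unfolding L_def by auto
  have "pfrac p w = digit_sum p w L 0" unfolding pfrac_def ptrunc_eq_digit_sum[OF wL] ..
  also have "\<dots> = (\<Sum>j\<in>{L..<0}. real (pdigit p s j) * real p powi j)"
    unfolding digit_sum_def by (intro sum.cong) (auto simp: wj)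
  also have "\<dots> = s - of_int \<lfloor>s\<rfloor>"
    using floor_div_ppow_expansion[of L 0 s] pmultiple_floor[OF pms] unfolding L_def by simp
  finally have "pchi p w = e2pi s" unfolding pchi_eq_e2pi by (intro e2pi_eq_if_diff_Ints) simp
  then show ?thesis unfolding w_def s_def .
qed

lemma pchi_pmul_eq_e2pi:
  assumes z: "z \<in> Qp p" and y: "y \<in> Qp p"
    and K: "max 0 (- pval z) + max 0 (- pval y) \<le> K"
  shows "pchi p (pmul p z y) = e2pi (ptrunc p z K * ptrunc p y K)"
proof -
  define K0 where "K0 = max 0 (- pval z) + max 0 (- pval y)"
  have "ptrunc p z K * ptrunc p y K - ptrunc p z K0 * ptrunc p y K0 =
    ptrunc p z K * (ptrunc p y K - ptrunc p y K0) + (ptrunc p z K - ptrunc p z K0) * ptrunc p y K0"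
    by (simp add: algebra_simps)
  moreover have "pmultiple p (ptrunc p z K * (ptrunc p y K - ptrunc p y K0)) 0"
    using pmultiple_mono[OF _ pmultiple_mult[OF pmultiple_ptrunc_pval[OF z] pmultiple_ptrunc_diff[OF y]],
        of 0 K0 K] K
    unfolding K0_def by simp
  moreover have "pmultiple p ((ptrunc p z K - ptrunc p z K0) * ptrunc p y K0) 0"
    using pmultiple_mono[OF _ pmultiple_mult[OF pmultiple_ptrunc_diff[OF z] pmultiple_ptrunc_pval[OF y]],
        of 0 K0 K] K
    unfolding K0_def by simp
  ultimately have "ptrunc p z K * ptrunc p y K - ptrunc p z K0 * ptrunc p y K0 \<in> \<int>"
    using pmultiple_0_Ints pmultiple_add by metis
  then show ?thesis
    using e2pi_eq_if_diff_Ints unfolding pchi_pmul_eq_e2pi_min[OF z y] K0_def[symmetric] by metis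
qed

lemma pchi_pmul_pzero: "z \<in> Qp p \<Longrightarrow> pchi p (pmul p z pzero) = 1"
  using pchi_pmul_eq_e2pi_min[OF _ pzero_Qp, of z] by (simp add: ptrunc_def pzero_def)

lemma pchi_pmul_eq_if_agree:
  assumes z: "z \<in> Qp p" and y: "y \<in> Qp p" and y': "y' \<in> Qp p"
    and a: "digits_agree (- pval z) y y'"
  shows "pchi p (pmul p z y) = pchi p (pmul p z y')"
proof -
  define K where "K = max 0 (- pval z) + max 0 (- pval y) + max 0 (- pval y')"
  have "pmultiple p (ptrunc p z K * (ptrunc p y K - ptrunc p y' K)) 0"
    using pmultiple_mult[OF pmultiple_ptrunc_pval[OF z] pmultiple_ptrunc_diff_if_agree[OF y y' a]] by simp
  then have "ptrunc p z K * ptrunc p y K - ptrunc p z K * ptrunc p y' K \<in> \<int>"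
    using pmultiple_0_Ints by (simp add: right_diff_distrib)
  moreover have "pchi p (pmul p z y) = e2pi (ptrunc p z K * ptrunc p y K)"
    by (rule pchi_pmul_eq_e2pi[OF z y]) (simp add: K_def)
  moreover have "pchi p (pmul p z y') = e2pi (ptrunc p z K * ptrunc p y' K)"
    by (rule pchi_pmul_eq_e2pi[OF z y']) (simp add: K_def)
  ultimately show ?thesis using e2pi_eq_if_diff_Ints by simp
qed

lemma ptrunc_fun_upd_diff:
  assumes "y \<in> Qp p" "M < K"
  shows "ptrunc p (y(M := e)) K - ptrunc p (y(M := 0)) K = real e * real p powi M"
proof -
  obtain L where "\<forall>j<L. y j = 0" using Qp_vanish_below[OF assms(1)] by blast
  then have L1: "\<forall>j<min L M. (y(M := e)) j = 0" and L2: "\<forall>j<min L M. (y(M := 0)) j = 0" by auto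
  have "ptrunc p (y(M := e)) K - ptrunc p (y(M := 0)) K =
      (\<Sum>j\<in>{min L M..<K}. (real ((y(M := e)) j) - real ((y(M := 0)) j)) * real p powi j)"
    unfolding ptrunc_eq_digit_sum[OF L1] ptrunc_eq_digit_sum[OF L2] digit_sum_def
    by (simp add: sum_subtractf left_diff_distrib)
  also have "\<dots> = (\<Sum>j\<in>{min L M..<K}. if j = M then real e * real p powi M else 0)"
    by (intro sum.cong) auto
  also have "\<dots> = real e * real p powi M" using assms(2) by simp
  finally show ?thesis .
qed

lemma pchi_pmul_fun_upd:
  assumes z: "z \<in> Qp p" and y: "y \<in> Qp p" and e: "e < p"
  defines "M \<equiv> - pval z - 1"
  shows "pchi p (pmul p z (y(M := e))) = pchi p (pmul p z (y(M := 0))) * e2pi (real e * real (z (pval z)) / real p)"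
proof -
  define v where "v = pval z"
  have ye: "y(M := e) \<in> Qp p" and y0: "y(M := 0) \<in> Qp p" using fun_upd_Qp y e p_ge_2 by auto
  define K where "K = max 0 (- v) + max 0 (- pval (y(M := e))) + max 0 (- pval (y(M := 0))) + max 0 (v + 1)"
  have c1: "pchi p (pmul p z (y(M := e))) = e2pi (ptrunc p z K * ptrunc p (y(M := e)) K)"
    by (rule pchi_pmul_eq_e2pi[OF z ye]) (simp add: K_def v_def)
  have c2: "pchi p (pmul p z (y(M := 0))) = e2pi (ptrunc p z K * ptrunc p (y(M := 0)) K)"
    by (rule pchi_pmul_eq_e2pi[OF z y0]) (simp add: K_def v_def)
  have d: "ptrunc p (y(M := e)) K - ptrunc p (y(M := 0)) K = real e * real p powi M"
    using ptrunc_fun_upd_diff[OF y] unfolding K_def M_def v_def by simp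
  have vK: "v < K" unfolding K_def by simp
  have "ptrunc p z K = digit_sum p z v K"
    using ptrunc_eq_digit_sum[OF Qp_vanish_below_pval[OF z]] unfolding v_def .
  also have "\<dots> = real (z v) * real p powi v + digit_sum p z (v + 1) K"
    using digit_sum_split[of v "v + 1" K z] digit_sum_plus_1[of v v z] vK by (simp add: digit_sum_empty)
  finally have zK: "ptrunc p z K = real (z v) * real p powi v + digit_sum p z (v + 1) K" .
  have "real p powi v * real p powi M = 1 / real p"
    using ppow_add[of v "- v - 1"] unfolding M_def v_def by (simp add: power_int_minus inverse_eq_divide)
  then have "ptrunc p z K * (real e * real p powi M) =
      real e * real (z v) / real p + real e * (digit_sum p z (v + 1) K * real p powi M)"
    unfolding zK by (simp add: algebra_simps)
  moreover have "real e * (digit_sum p z (v + 1) K * real p powi M) \<in> \<int>"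
  proof -
    have "pmultiple p (digit_sum p z (v + 1) K * real p powi M) 0"
      using pmultiple_mult[OF pmultiple_digit_sum[of z "v + 1" K] pmultiple_digit[of 1 M]]
      unfolding M_def v_def by simp
    then show ?thesis using pmultiple_0_Ints by (simp add: Ints_mult)
  qed
  ultimately have "ptrunc p z K * ptrunc p (y(M := e)) K -
      (ptrunc p z K * ptrunc p (y(M := 0)) K + real e * real (z v) / real p) \<in> \<int>"
    using d by (simp add: algebra_simps)
  then have "pchi p (pmul p z (y(M := e))) =
      e2pi (ptrunc p z K * ptrunc p (y(M := 0)) K + real e * real (z v) / real p)"
    unfolding c1 by (rule e2pi_eq_if_diff_Ints)
  then show ?thesis unfolding c2 e2pi_add v_def .
qed

end

locale char_on_balls = padic_haar +
  fixes z :: "int \<Rightarrow> nat"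
  assumes z_Qp: "z \<in> Qp p" and z_nonzero: "z \<noteq> pzero"
begin

abbreviation "v \<equiv> pval z"

definition chi_z :: "(int \<Rightarrow> nat) \<Rightarrow> complex" where
  "chi_z y = pchi p (pmul p z y)"

definition ball_char_integral :: "(int \<Rightarrow> nat) \<Rightarrow> int \<Rightarrow> complex" where
  "ball_char_integral c M = (\<integral>y. indicator (pball p c M) y * chi_z y \<partial>\<mu>)"

lemma chi_z_locally_constant: "x \<in> Qp p \<Longrightarrow> y \<in> pball p x M \<Longrightarrow> - v \<le> M \<Longrightarrow> chi_z y = chi_z x"
  unfolding chi_z_def pball_def digits_agree_def
  by (intro pchi_pmul_eq_if_agree z_Qp) (auto simp: digits_agree_def)

lemma chi_z_borel_measurable [measurable]: "chi_z \<in> borel_measurable \<mu>"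
  by (rule borel_measurable_locally_constant[of "- v"]) (auto intro: chi_z_locally_constant)

lemma norm_chi_z [simp]: "norm (chi_z y) = 1"
  unfolding chi_z_def pchi_eq_e2pi by simp

lemma chi_z_pzero: "chi_z pzero = 1"
  unfolding chi_z_def using pchi_pmul_pzero[OF z_Qp] .

lemma integrable_pball_chi_z: "integrable \<mu> (\<lambda>y. indicator (pball p c M) y * chi_z y)"
  by (rule integrable_indicator_bounded) auto

lemma ball_char_integral_small_ball:
  assumes "c \<in> Qp p" "- v \<le> M"
  shows "ball_char_integral c M = chi_z c * of_real (real p powi (- M))"
proof -
  have "ball_char_integral c M = (\<integral>y. indicator (pball p c M) y * chi_z c \<partial>\<mu>)"
    unfolding ball_char_integral_def using chi_z_locally_constant[OF assms(1) _ assms(2)]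
    by (intro Bochner_Integration.integral_cong refl) (auto simp: indicator_def)
  also have "\<dots> = of_real (measure \<mu> (pball p c M)) * chi_z c"
    by (rule integral_indicator_const) auto
  finally show ?thesis using measure_pball[OF assms(1)] by simp
qed

lemma ball_char_integral_split:
  "ball_char_integral c M = (\<Sum>e<p. ball_char_integral (c(M := e)) (M + 1))"
proof -
  have "indicator (pball p c M) y = (\<Sum>e<p. indicator (pball p (c(M := e)) (M + 1)) y :: complex)" for y
    unfolding pball_split_digit[of c M]
    by (rule indicator_UN_disjoint) (auto intro: disjoint_family_pball_split_digit)
  then have "ball_char_integral c M = (\<integral>y. (\<Sum>e<p. indicator (pball p (c(M := e)) (M + 1)) y * chi_z y) \<partial>\<mu>)"
    unfolding ball_char_integral_def by (simp add: sum_distrib_right)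
  also have "\<dots> = (\<Sum>e<p. ball_char_integral (c(M := e)) (M + 1))"
    unfolding ball_char_integral_def by (rule Bochner_Integration.integral_sum) (rule integrable_pball_chi_z)
  finally show ?thesis .
qed

lemma leading_digit_z: "0 < z v" "z v < p"
  using pval_digit_nonzero[OF z_Qp z_nonzero] Qp_digit_less[OF z_Qp] by auto

text \<open>On a ball of radius p^(v+1) the character runs through all p-th roots of unity equally often.\<close>

lemma ball_char_integral_large_ball:
  "c \<in> Qp p \<Longrightarrow> ball_char_integral c (- v - 1 - int n) = 0"
proof (induction n arbitrary: c)
  case 0
  define M where "M = - v - 1"
  have "ball_char_integral c M = (\<Sum>e<p. ball_char_integral (c(M := e)) (M + 1))"
    by (rule ball_char_integral_split)
  also have "\<dots> = (\<Sum>e<p. chi_z (c(M := 0)) * e2pi (real e * real (z v) / real p) *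
      of_real (real p powi (- (M + 1))))"
  proof (rule sum.cong[OF refl])
    fix e assume "e \<in> {..<p}"
    then have e: "e < p" by simp
    have "ball_char_integral (c(M := e)) (M + 1) = chi_z (c(M := e)) * of_real (real p powi (- (M + 1)))"
      by (rule ball_char_integral_small_ball) (auto simp: M_def fun_upd_Qp[OF "0.prems" e])
    also have "chi_z (c(M := e)) = chi_z (c(M := 0)) * e2pi (real e * real (z v) / real p)"
      unfolding chi_z_def M_def by (rule pchi_pmul_fun_upd[OF z_Qp "0.prems" e])
    finally show "ball_char_integral (c(M := e)) (M + 1) =
        chi_z (c(M := 0)) * e2pi (real e * real (z v) / real p) * of_real (real p powi (- (M + 1)))" .
  qed
  also have "\<dots> = chi_z (c(M := 0)) * of_real (real p powi (- (M + 1))) *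
      (\<Sum>e<p. e2pi (real e * real (z v) / real p))"
    by (simp add: sum_distrib_left mult_ac)
  also have "\<dots> = 0" using sum_e2pi_zero[OF leading_digit_z] by simp
  finally show ?case unfolding M_def by simp
next
  case (Suc n)
  define M where "M = - v - 1 - int (Suc n)"
  have "M + 1 = - v - 1 - int n" unfolding M_def by simp
  then have "ball_char_integral c M = (\<Sum>e<p. ball_char_integral (c(M := e)) (- v - 1 - int n))"
    using ball_char_integral_split[of c M] by (simp only:)
  also have "\<dots> = 0" using Suc fun_upd_Qp by (intro sum.neutral) auto
  finally show ?case unfolding M_def .
qed

lemma ball_char_integral_pzero:
  "ball_char_integral pzero M = (if - v \<le> M then of_real (real p powi (- M)) else 0)"
proof (cases "- v \<le> M")
  case False
  then have "M = - v - 1 - int (nat (- v - 1 - M))" by simp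
  then show ?thesis using ball_char_integral_large_ball[OF pzero_Qp] False by metis
qed (simp add: ball_char_integral_small_ball[OF pzero_Qp] chi_z_pzero)

end

section \<open>The heat kernel\<close>

locale padic_exponent = padic +
  fixes b :: real
  assumes b_pos: "0 < b"
begin

definition pb :: real where "pb = real p powr b"

text \<open>The value of |y|^b on the sphere |y| = p^m.\<close>

definition sphere_rate :: "int \<Rightarrow> real" where
  "sphere_rate m = real p powr (real_of_int m * b)"

definition escape_rate :: "int \<Rightarrow> real" where
  "escape_rate A = sphere_rate A * (1 - (pb - 1) / (real p * pb - 1))"

lemma pb_gt_1: "1 < pb" unfolding pb_def using p_gt_1 b_pos by simp

lemma sphere_rate_pos: "0 < sphere_rate m" unfolding sphere_rate_def using p_pos by simp

lemma sphere_rate_mono: "m \<le> m' \<Longrightarrow> sphere_rate m \<le> sphere_rate m'"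
  unfolding sphere_rate_def using p_gt_1 b_pos by (intro powr_mono) (auto intro: mult_right_mono)

lemma sphere_rate_add: "sphere_rate (m + int n) = sphere_rate m * pb ^ n"
proof -
  have "sphere_rate (m + int n) = real p powr (real_of_int m * b + real n * b)"
    unfolding sphere_rate_def by (simp add: algebra_simps)
  also have "\<dots> = sphere_rate m * (real p powr b) powr real n"
    unfolding sphere_rate_def powr_add powr_powr by (simp add: mult.commute)
  also have "(real p powr b) powr real n = pb ^ n" unfolding pb_def
    by (rule powr_realpow) (use p_pos in simp)
  finally show ?thesis .
qed

lemma sphere_rate_diff: "sphere_rate (m - int n) = sphere_rate m * (1 / pb) ^ n"
proof -
  have "sphere_rate m = sphere_rate (m - int n) * pb ^ n"
    using sphere_rate_add[of "m - int n" n] by simp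
  then show ?thesis using pb_gt_1 by (simp add: field_simps power_one_over)
qed

lemma ppow_powr_eq_sphere_rate: "(real p powi k) powr b = sphere_rate k"
proof -
  have "real p powi k = real p powr real_of_int k"
    by (rule powr_real_of_int'[symmetric]) (use p_pos in auto)
  then show ?thesis unfolding sphere_rate_def by (simp add: powr_powr)
qed

lemma escape_rate_sums:
  "(\<lambda>i. (sphere_rate (A - int i) - sphere_rate (A - 1 - int i)) * (1 - real p powi (- 1 - int i)))
     sums escape_rate A"
proof -
  define r where "r = 1 / pb"
  define t where "t = 1 / real p"
  have r: "0 < r" "r < 1" unfolding r_def using pb_gt_1 by auto
  have t: "0 < t" "t < 1" unfolding t_def using p_gt_1 by auto
  have tr: "0 < t * r" "t * r < 1" using r t mult_strict_mono[of t 1 r 1] by auto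
  have "(sphere_rate (A - int i) - sphere_rate (A - 1 - int i)) * (1 - real p powi (- 1 - int i)) =
      sphere_rate A * (1 - r) * (r ^ i - t * (t * r) ^ i)" for i
  proof -
    have "sphere_rate (A - 1 - int i) = sphere_rate A * r ^ Suc i"
      using sphere_rate_diff[of A "Suc i"] unfolding r_def by (simp add: algebra_simps)
    moreover have "sphere_rate (A - int i) = sphere_rate A * r ^ i"
      unfolding r_def by (rule sphere_rate_diff)
    moreover have "real p powi (- 1 - int i) = t ^ Suc i"
      using ppow_minus_nat[of "Suc i"] unfolding t_def by (simp add: algebra_simps)
    ultimately show ?thesis by (simp add: power_mult_distrib algebra_simps)
  qed
  moreover have "(\<lambda>i. sphere_rate A * (1 - r) * (r ^ i - t * (t * r) ^ i)) sums
      (sphere_rate A * (1 - r) * (1 / (1 - r) - t * (1 / (1 - t * r))))"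
    using r tr by (intro sums_mult sums_diff geometric_sums) auto
  moreover have "sphere_rate A * (1 - r) * (1 / (1 - r) - t * (1 / (1 - t * r))) = escape_rate A"
  proof -
    have "(1 - r) * (1 / (1 - r) - t * (1 / (1 - t * r))) = 1 - t * (1 - r) / (1 - t * r)"
      using r by (simp add: right_diff_distrib mult.commute)
    moreover have "1 < real p * pb" by (rule less_1_mult[OF p_gt_1 pb_gt_1])
    then have "t * (1 - r) / (1 - t * r) = (pb - 1) / (real p * pb - 1)"
      unfolding t_def r_def using pb_gt_1 p_gt_1 by (simp add: field_simps)
    ultimately show ?thesis unfolding escape_rate_def by (simp add: mult.assoc)
  qed
  ultimately show ?thesis by simp
qed

lemma escape_rate_nonneg: "0 \<le> escape_rate A"
proof -
  have "0 \<le> (sphere_rate (A - int i) - sphere_rate (A - 1 - int i)) * (1 - real p powi (- 1 - int i))" for i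
  proof (rule mult_nonneg_nonneg)
    show "0 \<le> sphere_rate (A - int i) - sphere_rate (A - 1 - int i)"
      using sphere_rate_mono[of "A - 1 - int i" "A - int i"] by simp
    show "0 \<le> 1 - real p powi (- 1 - int i)" using ppow_mono[of "- 1 - int i" 0] by simp
  qed
  then show ?thesis by (rule sums_le[OF _ sums_zero escape_rate_sums])
qed

end

locale heat_profile = padic_exponent +
  fixes s :: real
  assumes s_pos: "0 < s"
begin

text \<open>exp(-s |y|^b) on the sphere |y| = p^m.\<close>

definition sphere_weight :: "int \<Rightarrow> real" where
  "sphere_weight m = exp (- s * sphere_rate m)"

definition weight_drop :: "int \<Rightarrow> real" where
  "weight_drop m = sphere_weight m - sphere_weight (m + 1)"

definition kernel_series :: "int \<Rightarrow> real" where
  "kernel_series j = (\<Sum>k. weight_drop (j - int k) * real p powi (j - int k))"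

lemma sphere_weight_pos: "0 < sphere_weight m" unfolding sphere_weight_def by simp

lemma sphere_weight_le_1: "sphere_weight m \<le> 1"
  unfolding sphere_weight_def using s_pos sphere_rate_pos[of m] by simp

lemma sphere_weight_antimono: "m \<le> m' \<Longrightarrow> sphere_weight m' \<le> sphere_weight m"
  unfolding sphere_weight_def using s_pos sphere_rate_mono by (simp add: mult_left_mono)

lemma weight_drop_nonneg: "0 \<le> weight_drop m"
  unfolding weight_drop_def using sphere_weight_antimono[of m "m + 1"] by simp

lemma weight_drop_le_1: "weight_drop m \<le> 1"
  unfolding weight_drop_def using sphere_weight_pos[of "m + 1"] sphere_weight_le_1[of m] by simp

lemma sum_weight_drop_up: "(\<Sum>k<n. weight_drop (a + int k)) = sphere_weight a - sphere_weight (a + int n)"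
  by (induction n) (auto simp: weight_drop_def algebra_simps)

lemma sum_weight_drop_down:
  "(\<Sum>k<n. weight_drop (a - int k)) = sphere_weight (a - int n + 1) - sphere_weight (a + 1)"
  by (induction n) (auto simp: weight_drop_def algebra_simps)

lemma weight_drop_up_sums: "(\<lambda>k. weight_drop (a + int k)) sums sphere_weight a"
proof -
  have "filterlim (\<lambda>n. s * sphere_rate a * pb ^ n) at_top sequentially"
    using s_pos sphere_rate_pos[of a] pb_gt_1
    by (intro filterlim_tendsto_pos_mult_at_top[OF tendsto_const]
        filterlim_realpow_sequentially_gt1[THEN filterlim_at_infinity_imp_filterlim_at_top]) auto
  then have "(\<lambda>n. sphere_weight (a + int n)) \<longlonglongrightarrow> 0"
    unfolding sphere_weight_def sphere_rate_add
    by (auto intro: filterlim_compose[OF exp_at_bot] simp: filterlim_uminus_at_bot mult_ac)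
  then have "(\<lambda>n. sphere_weight a - sphere_weight (a + int n)) \<longlonglongrightarrow> sphere_weight a - 0"
    by (intro tendsto_intros)
  then show ?thesis unfolding sums_def sum_weight_drop_up by simp
qed

lemma weight_drop_down_sums: "(\<lambda>k. weight_drop (a - int k)) sums (1 - sphere_weight (a + 1))"
proof -
  have "norm (1 / pb) < 1" using pb_gt_1 by simp
  then have "(\<lambda>n. sphere_weight ((a + 1) - int n)) \<longlonglongrightarrow> exp (- s * (sphere_rate (a + 1) * 0))"
    unfolding sphere_weight_def sphere_rate_diff by (intro tendsto_intros)
  then have "(\<lambda>n. sphere_weight ((a + 1) - int n) - sphere_weight (a + 1)) \<longlonglongrightarrow> 1 - sphere_weight (a + 1)"
    by (intro tendsto_intros) simp
  then show ?thesis unfolding sums_def sum_weight_drop_down by (simp add: algebra_simps)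
qed

lemma summable_kernel_series: "summable (\<lambda>k. weight_drop (j - int k) * real p powi (j - int k))"
proof (rule summable_comparison_test'[of "\<lambda>k. real p powi j * (1 / real p) ^ k" 0])
  show "summable (\<lambda>k. real p powi j * (1 / real p) ^ k)"
    using p_gt_1 by (intro summable_mult summable_geometric) simp
  fix k :: nat
  have "real p powi (j - int k) = real p powi j * (1 / real p) ^ k"
    using ppow_add[of j "- int k"] by (simp add: ppow_minus_nat)
  then show "norm (weight_drop (j - int k) * real p powi (j - int k)) \<le> real p powi j * (1 / real p) ^ k"
    using weight_drop_nonneg[of "j - int k"] weight_drop_le_1[of "j - int k"] ppow_pos[of "j - int k"]
    by (simp add: abs_mult mult_left_le_one_le)
qed

lemma kernel_series_nonneg: "0 \<le> kernel_series j"
  unfolding kernel_series_def using weight_drop_nonneg ppow_pos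
  by (intro suminf_nonneg summable_kernel_series) (simp add: less_imp_le)

lemma ennreal_kernel_series:
  "ennreal (kernel_series j) = (\<Sum>k. ennreal (weight_drop (j - int k) * real p powi (j - int k)))"
  unfolding kernel_series_def using weight_drop_nonneg ppow_pos
  by (intro suminf_ennreal2[symmetric] summable_kernel_series) (simp add: less_imp_le)

text \<open>The weights decay superexponentially towards large spheres, which beats their volume.\<close>

lemma summable_sphere_weight_volume: "summable (\<lambda>n. sphere_weight (a + int n) * real p powi (a + int n))"
proof -
  define X where "X = ln (2 * real p) / (s * (pb - 1))"
  obtain N where N: "X / sphere_rate a < pb ^ N"
    using real_arch_pow[OF pb_gt_1] by blast
  show ?thesis
  proof (rule summable_ratio_test[of "1/2" N])
    fix n assume n: "N \<le> n"
    have "X < sphere_rate a * pb ^ N" using N sphere_rate_pos[of a] by (simp add: field_simps)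
    also have "\<dots> \<le> sphere_rate a * pb ^ n"
      using n pb_gt_1 sphere_rate_pos[of a] by (intro mult_left_mono power_increasing) auto
    finally have "ln (2 * real p) \<le> s * (pb - 1) * sphere_rate (a + int n)"
      using s_pos pb_gt_1 unfolding X_def sphere_rate_add by (simp add: field_simps)
    then have "exp (ln (2 * real p)) \<le> exp (s * (pb - 1) * sphere_rate (a + int n))" by simp
    then have e: "2 * real p \<le> exp (s * (pb - 1) * sphere_rate (a + int n))" using p_pos by simp
    have uS: "sphere_rate (a + int (Suc n)) = sphere_rate (a + int n) * pb"
      using sphere_rate_add[of a "Suc n"] sphere_rate_add[of a n] by simp
    have "sphere_weight (a + int (Suc n)) * real p powi (a + int (Suc n)) =
        (sphere_weight (a + int n) * real p powi (a + int n)) *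
        (real p / exp (s * (pb - 1) * sphere_rate (a + int n)))"
      unfolding sphere_weight_def uS using ppow_plus_1[of "a + int n"]
      by (simp add: exp_diff[symmetric] exp_minus field_simps exp_add[symmetric])
    also have "\<dots> \<le> (sphere_weight (a + int n) * real p powi (a + int n)) * (1 / 2)"
      using e p_pos sphere_weight_pos ppow_pos
      by (intro mult_left_mono) (auto simp: field_simps less_imp_le)
    finally show "norm (sphere_weight (a + int (Suc n)) * real p powi (a + int (Suc n))) \<le>
        1 / 2 * norm (sphere_weight (a + int n) * real p powi (a + int n))"
      using sphere_weight_pos ppow_pos by (simp add: abs_of_pos mult_ac)
  qed simp
qed

lemma weight_drop_le: "weight_drop m \<le> s * (sphere_rate (m + 1) - sphere_rate m)"
proof -
  define x where "x = s * sphere_rate m"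
  define y where "y = s * sphere_rate (m + 1)"
  have xy: "0 \<le> x" "x \<le> y" unfolding x_def y_def
    using s_pos sphere_rate_pos sphere_rate_mono[of m "m + 1"] by (auto intro: mult_left_mono less_imp_le)
  have "weight_drop m = exp (- x) * (1 - exp (x - y))"
    unfolding weight_drop_def sphere_weight_def x_def y_def by (simp add: algebra_simps exp_diff exp_minus field_simps)
  also have "\<dots> \<le> 1 * (y - x)"
  proof (rule mult_mono)
    show "1 - exp (x - y) \<le> y - x" using exp_ge_add_one_self[of "x - y"] by linarith
  qed (use xy in auto)
  finally show ?thesis unfolding x_def y_def by (simp add: algebra_simps)
qed

lemma weight_drop_ge: "s * (sphere_rate (m + 1) - sphere_rate m) * (1 - s * sphere_rate (m + 1)) \<le> weight_drop m"
proof -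
  define x where "x = s * sphere_rate m"
  define y where "y = s * sphere_rate (m + 1)"
  have xy: "0 \<le> x" "x \<le> y" unfolding x_def y_def
    using s_pos sphere_rate_pos sphere_rate_mono[of m "m + 1"] by (auto intro: mult_left_mono less_imp_le)
  have "(y - x) * (1 - y) \<le> (y - x) * exp (- y)"
    using xy exp_ge_add_one_self[of "- y"] by (intro mult_left_mono) auto
  also have "\<dots> \<le> exp (- x) - exp (- y)"
  proof -
    have "exp (- y) * (1 + (y - x)) \<le> exp (- y) * exp (y - x)"
      using exp_ge_add_one_self[of "y - x"] by (intro mult_left_mono) auto
    also have "exp (- y) * exp (y - x) = exp (- x)" by (simp add: exp_add[symmetric])
    finally show ?thesis by (simp add: algebra_simps)
  qed
  finally show ?thesis unfolding weight_drop_def sphere_weight_def x_def y_def by (simp add: algebra_simps)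
qed

end

definition psphere :: "nat \<Rightarrow> int \<Rightarrow> (int \<Rightarrow> nat) set" where
  "psphere p m = pball p pzero (- m) - pball p pzero (- m + 1)"

context padic
begin

lemma psphere_iff: "y \<in> Qp p \<Longrightarrow> y \<in> psphere p m \<longleftrightarrow> y \<noteq> pzero \<and> pval y = - m"
  unfolding psphere_def using pball_pzero_iff by auto

lemma psphere_subset: "psphere p m \<subseteq> pball p pzero (- m)"
  unfolding psphere_def by auto

end

text \<open>Fix z with valuation v. The character chi(zy) is 1 on the ball |y| <= p^v and averages to 0
  over every ball of radius p^(v+1); hence of the spheres outside this ball only the innermost one
  contributes to the integral of chi(zy) exp(-s |y|^b).\<close>

locale heat_kernel_at = char_on_balls + heat_profile
begin

definition heat_weight :: "(int \<Rightarrow> nat) \<Rightarrow> real" where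
  "heat_weight y = exp (- s * pabs p y powr b)"

definition heat_integrand :: "(int \<Rightarrow> nat) \<Rightarrow> complex" where
  "heat_integrand y = chi_z y * complex_of_real (heat_weight y)"

abbreviation "inner_ball \<equiv> pball p pzero (- v)"

definition sphere_piece :: "nat \<Rightarrow> (int \<Rightarrow> nat) \<Rightarrow> complex" where
  "sphere_piece n y = (case n of 0 \<Rightarrow> indicator inner_ball y * heat_integrand y
     | Suc k \<Rightarrow> indicator (psphere p (v + 1 + int k)) y * heat_integrand y)"

lemma heat_weight_borel_measurable [measurable]: "heat_weight \<in> borel_measurable \<mu>"
  unfolding heat_weight_def by measurable

lemma heat_integrand_borel_measurable [measurable]: "heat_integrand \<in> borel_measurable \<mu>"
  unfolding heat_integrand_def by measurable

lemma psphere_sets [measurable]: "psphere p m \<in> sets \<mu>"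
  unfolding psphere_def by (intro sets.Diff pball_sets)

lemma heat_weight_eq: "y \<in> Qp p \<Longrightarrow> y \<noteq> pzero \<Longrightarrow> heat_weight y = sphere_weight (- pval y)"
  unfolding heat_weight_def sphere_weight_def using pabs_eq_ppow ppow_powr_eq_sphere_rate by simp

lemma heat_weight_nonneg: "0 \<le> heat_weight y" unfolding heat_weight_def by simp

lemma heat_weight_le_1: "heat_weight y \<le> 1"
  unfolding heat_weight_def using s_pos by simp

lemma norm_heat_integrand: "norm (heat_integrand y) = heat_weight y"
  unfolding heat_integrand_def using heat_weight_nonneg by (simp add: norm_mult)

lemma sphere_piece_single:
  assumes y: "y \<in> Qp p"
  obtains k where "\<And>n. sphere_piece n y = (if n = k then heat_integrand y else 0)"
proof (cases "y \<in> inner_ball")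
  case True
  then have "y \<notin> psphere p (v + 1 + int k)" for k using psphere_iff[OF y] pball_pzero_iff[OF y] by auto
  then show ?thesis using True by (intro that[of 0]) (auto simp: sphere_piece_def split: nat.split)
next
  case False
  then have "y \<noteq> pzero" "pval y < - v" using pball_pzero_iff[OF y] by auto
  define k0 where "k0 = nat (- pval y - v - 1)"
  have sphere: "y \<in> psphere p (v + 1 + int k) \<longleftrightarrow> k = k0" for k
    using psphere_iff[OF y] \<open>y \<noteq> pzero\<close> \<open>pval y < - v\<close> unfolding k0_def by auto
  have "sphere_piece n y = (if n = Suc k0 then heat_integrand y else 0)" for n
    using False sphere[of k0] sphere by (cases n) (auto simp: sphere_piece_def)
  then show ?thesis by (rule that)
qed

lemma sphere_piece_sums: "y \<in> Qp p \<Longrightarrow> (\<lambda>n. sphere_piece n y) sums heat_integrand y"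
proof (elim sphere_piece_single)
  fix k assume "\<And>n. sphere_piece n y = (if n = k then heat_integrand y else 0)"
  then show ?thesis using sums_single[of k "\<lambda>_. heat_integrand y"] by simp
qed

lemma summable_norm_sphere_piece: "y \<in> Qp p \<Longrightarrow> summable (\<lambda>n. norm (sphere_piece n y))"
proof (elim sphere_piece_single)
  fix k assume "\<And>n. sphere_piece n y = (if n = k then heat_integrand y else 0)"
  then show ?thesis by (intro summable_finite[of "{k}"]) auto
qed

lemma emeasure_psphere_finite: "emeasure \<mu> (psphere p m) < \<top>"
  using emeasure_mono[OF psphere_subset pball_sets, of m] emeasure_pball_finite[of pzero "- m"]
  by (simp add: le_less_trans)

lemma integrable_sphere_piece: "integrable \<mu> (sphere_piece n)"
proof -
  have "integrable \<mu> (\<lambda>y. indicator A y * heat_integrand y)" if "A \<in> sets \<mu>" "emeasure \<mu> A < \<top>" for A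
    using that norm_heat_integrand heat_weight_le_1 by (intro integrable_indicator_bounded) auto
  then show ?thesis
    unfolding sphere_piece_def using emeasure_psphere_finite psphere_sets by (cases n) auto
qed

lemma integral_norm_sphere_piece_le:
  "(\<integral>y. norm (sphere_piece n y) \<partial>\<mu>) \<le>
     sphere_weight (v + int n) * real p powi (v + int n) + (if n = 0 then real p powi v else 0)"
proof (cases n)
  case 0
  have "(\<integral>y. norm (sphere_piece n y) \<partial>\<mu>) \<le> (\<integral>y. indicator inner_ball y \<partial>\<mu>)"
  proof (rule integral_mono)
    show "integrable \<mu> (\<lambda>y. norm (sphere_piece n y))" using integrable_sphere_piece by simp
    show "norm (sphere_piece n y) \<le> indicator inner_ball y" for y
      unfolding sphere_piece_def 0 using heat_weight_le_1
      by (auto simp: indicator_def norm_mult norm_heat_integrand)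
  qed (auto intro: integrable_real_indicator)
  also have "\<dots> = real p powi v"
    using measure_pball[OF pzero_Qp, of "- v"] by (simp add: Int_absorb2 pball_def)
  finally show ?thesis using sphere_weight_pos ppow_pos 0 by (simp add: less_imp_le add_increasing)
next
  case (Suc k)
  define m where "m = v + int n"
  have piece: "sphere_piece n y = indicator (psphere p m) y * heat_integrand y" for y
    unfolding sphere_piece_def m_def Suc by (simp add: add_ac)
  have "norm (sphere_piece n y) \<le> sphere_weight m * indicator (pball p pzero (- m)) y" for y
  proof (cases "y \<in> psphere p m")
    case True
    then have "y \<in> Qp p" "y \<noteq> pzero" "pval y = - m" using psphere_iff psphere_def pball_def by auto
    moreover have "y \<in> pball p pzero (- m)" using True psphere_subset by blast
    ultimately show ?thesis unfolding piece using True
      by (simp add: norm_mult norm_heat_integrand heat_weight_eq)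
  qed (simp add: piece sphere_weight_pos less_imp_le)
  then have "(\<integral>y. norm (sphere_piece n y) \<partial>\<mu>) \<le> (\<integral>y. sphere_weight m * indicator (pball p pzero (- m)) y \<partial>\<mu>)"
    using integrable_sphere_piece
    by (intro integral_mono integrable_mult_right integrable_real_indicator) auto
  also have "\<dots> = sphere_weight m * real p powi m"
    using measure_pball[OF pzero_Qp, of "- m"] by (simp add: Int_absorb2 pball_def)
  finally show ?thesis unfolding m_def Suc by simp
qed

lemma integral_heat_integrand_suminf: "(\<integral>y. heat_integrand y \<partial>\<mu>) = (\<Sum>n. \<integral>y. sphere_piece n y \<partial>\<mu>)"
proof -
  have "summable (\<lambda>n. sphere_weight (v + int n) * real p powi (v + int n) + (if n = 0 then real p powi v else 0))"
    using summable_finite[of "{0}" "\<lambda>n. if n = 0 then real p powi v else 0"]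
    by (intro summable_add summable_sphere_weight_volume) auto
  then have "summable (\<lambda>n. \<integral>y. norm (sphere_piece n y) \<partial>\<mu>)"
    by (rule summable_comparison_test'[of _ 0]) (use integral_norm_sphere_piece_le in auto)
  then have "(\<integral>y. (\<Sum>n. sphere_piece n y) \<partial>\<mu>) = (\<Sum>n. \<integral>y. sphere_piece n y \<partial>\<mu>)"
    using integrable_sphere_piece summable_norm_sphere_piece by (intro integral_suminf) auto
  moreover have "(\<integral>y. heat_integrand y \<partial>\<mu>) = (\<integral>y. (\<Sum>n. sphere_piece n y) \<partial>\<mu>)"
    using sphere_piece_sums sums_unique by (intro Bochner_Integration.integral_cong) auto
  ultimately show ?thesis by simp
qed

lemma integral_sphere_piece_Suc:
  "(\<integral>y. sphere_piece (Suc k) y \<partial>\<mu>) = of_real (sphere_weight (v + 1 + int k)) *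
     (ball_char_integral pzero (- (v + 1 + int k)) - ball_char_integral pzero (- (v + 1 + int k) + 1))"
proof -
  define m where "m = v + 1 + int k"
  have sub: "pball p pzero (- m + 1) \<subseteq> pball p pzero (- m)" by (rule pball_antimono) simp
  have "sphere_piece (Suc k) y = of_real (sphere_weight m) *
      (indicator (pball p pzero (- m)) y * chi_z y - indicator (pball p pzero (- m + 1)) y * chi_z y)" for y
  proof (cases "y \<in> psphere p m")
    case True
    then have "y \<in> Qp p" "y \<noteq> pzero" "pval y = - m" using psphere_iff psphere_def pball_def by auto
    then have "heat_weight y = sphere_weight m" using heat_weight_eq by simp
    then show ?thesis
      using True unfolding sphere_piece_def m_def heat_integrand_def psphere_def by (simp add: mult_ac)
  next
    case False
    then have "indicator (pball p pzero (- m)) y = (indicator (pball p pzero (- m + 1)) y :: complex)"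
      using sub unfolding psphere_def by (auto simp: indicator_def)
    then show ?thesis using False unfolding sphere_piece_def m_def by simp
  qed
  then have "(\<integral>y. sphere_piece (Suc k) y \<partial>\<mu>) = of_real (sphere_weight m) * (\<integral>y.
      (indicator (pball p pzero (- m)) y * chi_z y - indicator (pball p pzero (- m + 1)) y * chi_z y) \<partial>\<mu>)"
    by simp
  also have "(\<integral>y. (indicator (pball p pzero (- m)) y * chi_z y -
      indicator (pball p pzero (- m + 1)) y * chi_z y) \<partial>\<mu>) =
      ball_char_integral pzero (- m) - ball_char_integral pzero (- m + 1)"
    unfolding ball_char_integral_def by (intro Bochner_Integration.integral_diff integrable_pball_chi_z)
  finally show ?thesis unfolding m_def .
qed

text \<open>Layer-cake decomposition of the weight on the inner ball.\<close>

lemma inner_ball_weight_expansion: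
  assumes y: "y \<in> Qp p"
  shows "ennreal (indicator inner_ball y * heat_weight y) = ennreal (sphere_weight (v + 1)) * indicator inner_ball y +
     (\<Sum>k. ennreal (weight_drop (v - int k)) * indicator (pball p pzero (int k - v)) y)"
proof (cases "y \<in> inner_ball")
  case False
  have "y \<notin> pball p pzero (int k - v)" for k using False pball_antimono[of "- v" "int k - v" pzero] by auto
  then show ?thesis using False by simp
next
  case True
  have sums_ennreal: "(\<Sum>k<n. ennreal (weight_drop (v - int k))) = ennreal (\<Sum>k<n. weight_drop (v - int k))" for n
    using weight_drop_nonneg by (intro sum_ennreal) auto
  show ?thesis
  proof (cases "y = pzero")
    case yz: True
    have "(\<Sum>k. ennreal (weight_drop (v - int k)) * indicator (pball p pzero (int k - v)) y) =
        (\<Sum>k. ennreal (weight_drop (v - int k)))" using y yz by (simp add: pball_pzero_iff)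
    also have "\<dots> = ennreal (1 - sphere_weight (v + 1))"
      using weight_drop_down_sums[of v] weight_drop_nonneg by (simp add: suminf_ennreal2 sums_iff)
    finally show ?thesis using yz True sphere_weight_le_1[of "v + 1"] sphere_weight_pos[of "v + 1"]
      by (simp add: heat_weight_def ennreal_plus[symmetric] less_imp_le)
  next
    case ynz: False
    have wv: "- v \<le> pval y" using True ynz pball_pzero_iff[OF y] by auto
    define n where "n = nat (v + pval y + 1)"
    have "indicator (pball p pzero (int k - v)) y = (if k < n then 1 else (0::ennreal))" for k
      using pball_pzero_iff[OF y] ynz wv unfolding n_def by auto
    then have "(\<Sum>k. ennreal (weight_drop (v - int k)) * indicator (pball p pzero (int k - v)) y) =
        (\<Sum>k<n. ennreal (weight_drop (v - int k)))"
      by (subst suminf_finite[of "{..<n}"]) auto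
    also have "\<dots> = ennreal (sphere_weight (- pval y) - sphere_weight (v + 1))"
      unfolding sums_ennreal sum_weight_drop_down n_def using wv by simp
    finally show ?thesis
      using True heat_weight_eq[OF y ynz] sphere_weight_pos[of "v + 1"] sphere_weight_antimono[of "- pval y" "v + 1"] wv
      by (simp add: ennreal_plus[symmetric] less_imp_le)
  qed
qed

lemma integral_sphere_piece_0:
  "(\<integral>y. sphere_piece 0 y \<partial>\<mu>) = of_real (sphere_weight (v + 1) * real p powi v + kernel_series v)"
proof -
  have piece: "sphere_piece 0 y = of_real (indicator inner_ball y * heat_weight y)" for y
    using chi_z_locally_constant[OF pzero_Qp, of y "- v"] chi_z_pzero
    by (auto simp: sphere_piece_def heat_integrand_def indicator_def)
  have nonneg: "0 \<le> sphere_weight (v + 1) * real p powi v + kernel_series v"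
    using sphere_weight_pos[of "v + 1"] ppow_pos[of v] kernel_series_nonneg[of v] by simp
  have "(\<integral>\<^sup>+ y. ennreal (indicator inner_ball y * heat_weight y) \<partial>\<mu>) =
      (\<integral>\<^sup>+ y. ennreal (sphere_weight (v + 1)) * indicator inner_ball y +
         (\<Sum>k. ennreal (weight_drop (v - int k)) * indicator (pball p pzero (int k - v)) y) \<partial>\<mu>)"
    by (intro nn_integral_cong) (simp add: inner_ball_weight_expansion)
  also have "\<dots> = ennreal (sphere_weight (v + 1)) * emeasure \<mu> inner_ball +
      (\<Sum>k. ennreal (weight_drop (v - int k)) * emeasure \<mu> (pball p pzero (int k - v)))"
    by (subst nn_integral_add) (auto simp: nn_integral_suminf nn_integral_cmult)
  also have "\<dots> = ennreal (sphere_weight (v + 1) * real p powi v + kernel_series v)"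
    using sphere_weight_pos weight_drop_nonneg ppow_pos kernel_series_nonneg
    by (simp add: emeasure_pball_pzero ennreal_kernel_series ennreal_mult ennreal_plus less_imp_le)
  finally have "(\<integral>y. indicator inner_ball y * heat_weight y \<partial>\<mu>) = sphere_weight (v + 1) * real p powi v + kernel_series v"
    using nonneg heat_weight_nonneg by (subst integral_eq_nn_integral) auto
  then show ?thesis unfolding piece integral_complex_of_real by simp
qed

lemma integral_heat_integrand: "(\<integral>y. heat_integrand y \<partial>\<mu>) = of_real (kernel_series v)"
proof -
  have "(\<Sum>n. \<integral>y. sphere_piece n y \<partial>\<mu>) = (\<Sum>n\<in>{0, Suc 0}. \<integral>y. sphere_piece n y \<partial>\<mu>)"
  proof (rule suminf_finite)
    fix n :: nat assume "n \<notin> {0, Suc 0}"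
    then obtain k where "n = Suc (Suc k)" by (metis insertCI not0_implies_Suc)
    then show "(\<integral>y. sphere_piece n y \<partial>\<mu>) = 0"
      using integral_sphere_piece_Suc[of "Suc k"] ball_char_integral_pzero by simp
  qed simp
  moreover have "(\<integral>y. sphere_piece (Suc 0) y \<partial>\<mu>) = - of_real (sphere_weight (v + 1) * real p powi v)"
    using integral_sphere_piece_Suc[of 0] ball_char_integral_pzero by simp
  ultimately show ?thesis unfolding integral_heat_integrand_suminf using integral_sphere_piece_0 by simp
qed

end

locale heat_kernel = padic_haar + padic_exponent +
  fixes \<sigma> t :: real
  assumes sigma_pos: "0 < \<sigma>" and t_pos: "0 < t"

sublocale heat_kernel \<subseteq> heat_profile p b "\<sigma> * t"
  using sigma_pos t_pos by unfold_locales simp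

context heat_kernel
begin

lemma prho_eq_kernel_series:
  assumes "z \<in> Qp p" "z \<noteq> pzero"
  shows "prho \<mu> p b \<sigma> t z = kernel_series (pval z)"
proof -
  interpret heat_kernel_at p \<mu> z b "\<sigma> * t"
    using assms by unfold_locales
  have "prho \<mu> p b \<sigma> t z = Re (\<integral>y. heat_integrand y \<partial>\<mu>)"
    unfolding prho_def heat_integrand_def chi_z_def heat_weight_def by (simp add: mult_ac)
  then show ?thesis using integral_heat_integrand by simp
qed

lemma prho_psub_first_diff:
  assumes "y \<in> Qp p" "c \<in> Qp p" "y j \<noteq> c j" "\<forall>i<j. y i = c i"
  shows "prho \<mu> p b \<sigma> t (psub p y c) = kernel_series j"
  using prho_eq_kernel_series[OF psub_Qp psub_first_diff(1)] psub_first_diff(2) assms by simp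

lemma ennreal_kernel_series_split:
  assumes "A \<le> j"
  shows "ennreal (kernel_series j) =
    (\<Sum>i. ennreal (weight_drop (A + int i) * real p powi (A + int i)) * (if A + int i \<le> j then 1 else 0)) +
    ennreal (kernel_series (A - 1))"
proof -
  define f where "f k = ennreal (weight_drop (j - int k) * real p powi (j - int k))" for k
  define n where "n = nat (j - A) + 1"
  have "ennreal (kernel_series j) = (\<Sum>k. f (k + n)) + (\<Sum>k<n. f k)"
    unfolding ennreal_kernel_series f_def by (rule suminf_offset) simp
  also have "(\<Sum>k. f (k + n)) = ennreal (kernel_series (A - 1))"
  proof -
    have e: "j - int (k + n) = A - 1 - int k" for k unfolding n_def using assms by simp
    show ?thesis unfolding ennreal_kernel_series f_def by (simp only: e)
  qed
  also have "(\<Sum>k<n. f k) = (\<Sum>i<n. f (n - Suc i))" by (rule sum.nat_diff_reindex[symmetric])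
  also have "\<dots> = (\<Sum>i<n. ennreal (weight_drop (A + int i) * real p powi (A + int i)))"
  proof (rule sum.cong[OF refl])
    fix i assume "i \<in> {..<n}"
    then have "j - int (n - Suc i) = A + int i" unfolding n_def using assms by auto
    then show "f (n - Suc i) = ennreal (weight_drop (A + int i) * real p powi (A + int i))"
      unfolding f_def by simp
  qed
  also have "\<dots> = (\<Sum>i. ennreal (weight_drop (A + int i) * real p powi (A + int i)) *
      (if A + int i \<le> j then 1 else 0))"
  proof -
    have "A + int i \<le> j \<longleftrightarrow> i < n" for i unfolding n_def using assms by auto
    then show ?thesis by (subst suminf_finite[of "{..<n}"]) auto
  qed
  finally show ?thesis by (simp add: add.commute)
qed

definition ball_retention :: "int \<Rightarrow> real" where
  "ball_retention A = sphere_weight A + real p powi (- A) * kernel_series (A - 1)"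

lemma ball_retention_nonneg: "0 \<le> ball_retention A"
  unfolding ball_retention_def using sphere_weight_pos[of A] ppow_pos[of "- A"] kernel_series_nonneg[of "A - 1"]
  by simp

text \<open>For c in the ball B of radius p^(-A), the integral of rho(t, y - c) over y in B does not
  depend on c: y - c has valuation j exactly on the shell of points that agree with c below j.\<close>

lemma pball_prho_expansion:
  assumes c: "c \<in> pball p pzero A" and y: "y \<in> Qp p" "y \<noteq> c"
  shows "indicator (pball p pzero A) y * ennreal (prho \<mu> p b \<sigma> t (psub p y c)) =
    (\<Sum>i. ennreal (weight_drop (A + int i) * real p powi (A + int i)) * indicator (pball p c (A + int i)) y) +
    ennreal (kernel_series (A - 1)) * indicator (pball p pzero A) y"
proof (cases "y \<in> pball p pzero A")
  case False
  then have "y \<notin> pball p c (A + int i)" for i using pball_subset_pball_pzero[OF c] by blast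
  then show ?thesis using False by simp
next
  case True
  have cq: "c \<in> Qp p" using c unfolding pball_def by simp
  obtain j where j: "y j \<noteq> c j" "\<forall>i<j. y i = c i" using Qp_first_diff_digit[OF y(1) cq y(2)] by blast
  have "digits_agree A y c" using True c unfolding pball_def digits_agree_def by simp
  then have Aj: "A \<le> j" using digits_agree_iff_le[OF j] by simp
  have "indicator (pball p c (A + int i)) y = (if A + int i \<le> j then 1 else (0::ennreal))" for i
    using y(1) digits_agree_iff_le[OF j] unfolding pball_def by simp
  then show ?thesis
    using True unfolding prho_psub_first_diff[OF y(1) cq j] ennreal_kernel_series_split[OF Aj] by simp
qed

lemma nn_integral_pball_prho:
  assumes c: "c \<in> pball p pzero A"
  shows "(\<integral>\<^sup>+ y. indicator (pball p pzero A) y * ennreal (prho \<mu> p b \<sigma> t (psub p y c)) \<partial>\<mu>) =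
    ennreal (ball_retention A)"
proof -
  have cq: "c \<in> Qp p" using c unfolding pball_def by simp
  define a where "a i = ennreal (weight_drop (A + int i) * real p powi (A + int i))" for i
  have "AE y in \<mu>. y \<noteq> c" by (rule AE_I'[OF singleton_null_sets[OF cq]]) auto
  then have "AE y in \<mu>. indicator (pball p pzero A) y * ennreal (prho \<mu> p b \<sigma> t (psub p y c)) =
      (\<Sum>i. a i * indicator (pball p c (A + int i)) y) +
      ennreal (kernel_series (A - 1)) * indicator (pball p pzero A) y"
    using AE_space unfolding a_def by eventually_elim (simp add: pball_prho_expansion[OF c])
  then have "(\<integral>\<^sup>+ y. indicator (pball p pzero A) y * ennreal (prho \<mu> p b \<sigma> t (psub p y c)) \<partial>\<mu>) =
      (\<integral>\<^sup>+ y. (\<Sum>i. a i * indicator (pball p c (A + int i)) y) +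
        ennreal (kernel_series (A - 1)) * indicator (pball p pzero A) y \<partial>\<mu>)"
    by (rule nn_integral_cong_AE)
  also have "\<dots> = (\<Sum>i. a i * emeasure \<mu> (pball p c (A + int i))) +
      ennreal (kernel_series (A - 1)) * emeasure \<mu> (pball p pzero A)"
    by (subst nn_integral_add) (auto simp: nn_integral_suminf nn_integral_cmult)
  also have "(\<Sum>i. a i * emeasure \<mu> (pball p c (A + int i))) = (\<Sum>i. ennreal (weight_drop (A + int i)))"
  proof -
    have "a i * emeasure \<mu> (pball p c (A + int i)) = ennreal (weight_drop (A + int i))" for i
    proof -
      have "weight_drop (A + int i) * real p powi (A + int i) * real p powi (- (A + int i)) = weight_drop (A + int i)"
        using ppow_add[of "A + int i" "- (A + int i)"] by simp
      then show ?thesis unfolding a_def emeasure_pball[OF cq]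
        using weight_drop_nonneg ppow_pos by (simp add: ennreal_mult[symmetric] less_imp_le mult.assoc)
    qed
    then show ?thesis by simp
  qed
  also have "(\<Sum>i. ennreal (weight_drop (A + int i))) = ennreal (sphere_weight A)"
    using weight_drop_up_sums[of A] weight_drop_nonneg by (simp add: suminf_ennreal2 sums_iff)
  also have "ennreal (sphere_weight A) + ennreal (kernel_series (A - 1)) * emeasure \<mu> (pball p pzero A) =
      ennreal (ball_retention A)"
  proof -
    have nonneg: "0 \<le> kernel_series (A - 1)" "0 \<le> real p powi (- A)" "0 \<le> sphere_weight A"
      using kernel_series_nonneg[of "A - 1"] ppow_pos[of "- A"] sphere_weight_pos[of A] by auto
    then have "ennreal (kernel_series (A - 1)) * ennreal (real p powi (- A)) =
        ennreal (real p powi (- A) * kernel_series (A - 1))"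
      by (simp add: ennreal_mult[symmetric] mult.commute)
    then show ?thesis unfolding emeasure_pball_pzero ball_retention_def
      using nonneg by (simp add: ennreal_plus)
  qed
  finally show ?thesis .
qed

end

section \<open>Random walk in a ball\<close>

definition first_diff :: "(int \<Rightarrow> nat) \<Rightarrow> (int \<Rightarrow> nat) \<Rightarrow> int option" where
  "first_diff y c = (if y = c then None else Some (LEAST j. y j \<noteq> c j))"

context padic_haar
begin

lemma digit_eq_sets: "{x \<in> space (\<mu> \<Otimes>\<^sub>M \<mu>). fst x k = snd x k} \<in> sets (\<mu> \<Otimes>\<^sub>M \<mu>)"
proof -
  have "{x \<in> space (\<mu> \<Otimes>\<^sub>M \<mu>). fst x k = snd x k} =
      (\<Union>e<p. {y \<in> Qp p. y k = e} \<times> {y \<in> Qp p. y k = e})"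
    using Qp_digit_less by (auto simp: space_pair_measure)
  also have "\<dots> \<in> sets (\<mu> \<Otimes>\<^sub>M \<mu>)"
    using digit_set_borel by (intro sets.finite_UN finite_lessThan ballI pair_measureI) auto
  finally show ?thesis .
qed

lemma digits_agree_sets: "{x \<in> space (\<mu> \<Otimes>\<^sub>M \<mu>). \<forall>k<j. fst x k = snd x k} \<in> sets (\<mu> \<Otimes>\<^sub>M \<mu>)"
proof -
  have "j - 1 \<in> {..<j}" by simp
  then have "{x \<in> space (\<mu> \<Otimes>\<^sub>M \<mu>). \<forall>k<j. fst x k = snd x k} =
      (\<Inter>k\<in>{..<j}. {x \<in> space (\<mu> \<Otimes>\<^sub>M \<mu>). fst x k = snd x k})"
    by blast
  also have "\<dots> \<in> sets (\<mu> \<Otimes>\<^sub>M \<mu>)"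
    using digit_eq_sets by (intro sets.countable_INT) auto
  finally show ?thesis .
qed

lemma diagonal_sets: "{x \<in> space (\<mu> \<Otimes>\<^sub>M \<mu>). fst x = snd x} \<in> sets (\<mu> \<Otimes>\<^sub>M \<mu>)"
proof -
  have "{x \<in> space (\<mu> \<Otimes>\<^sub>M \<mu>). fst x = snd x} = (\<Inter>k. {x \<in> space (\<mu> \<Otimes>\<^sub>M \<mu>). fst x k = snd x k})"
    by auto
  also have "\<dots> \<in> sets (\<mu> \<Otimes>\<^sub>M \<mu>)"
    using digit_eq_sets by (intro sets.countable_INT) auto
  finally show ?thesis .
qed

lemma first_diff_eq_Some:
  assumes "y j \<noteq> c j" "\<forall>i<j. y i = c i"
  shows "first_diff y c = Some j"
proof -
  have "(LEAST j. y j \<noteq> c j) = j"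
  proof (rule Least_equality)
    show "\<And>k. y k \<noteq> c k \<Longrightarrow> j \<le> k" using assms(2) by (meson not_le)
  qed (rule assms(1))
  then show ?thesis using assms(1) unfolding first_diff_def by auto
qed

lemma first_diff_measurable:
  "(\<lambda>x. first_diff (fst x) (snd x)) \<in> measurable (\<mu> \<Otimes>\<^sub>M \<mu>) (count_space UNIV)"
proof (subst measurable_count_space_eq2_countable, intro conjI ballI)
  fix d :: "int option"
  show "(\<lambda>x. first_diff (fst x) (snd x)) -` {d} \<inter> space (\<mu> \<Otimes>\<^sub>M \<mu>) \<in> sets (\<mu> \<Otimes>\<^sub>M \<mu>)"
  proof (cases d)
    case None
    have "(\<lambda>x. first_diff (fst x) (snd x)) -` {d} \<inter> space (\<mu> \<Otimes>\<^sub>M \<mu>) = {x \<in> space (\<mu> \<Otimes>\<^sub>M \<mu>). fst x = snd x}"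
      unfolding None first_diff_def by (auto split: if_splits)
    then show ?thesis using diagonal_sets by simp
  next
    case (Some j)
    have "(\<lambda>x. first_diff (fst x) (snd x)) -` {d} \<inter> space (\<mu> \<Otimes>\<^sub>M \<mu>) =
      {x \<in> space (\<mu> \<Otimes>\<^sub>M \<mu>). \<forall>k<j. fst x k = snd x k} - {x \<in> space (\<mu> \<Otimes>\<^sub>M \<mu>). fst x j = snd x j}"
    proof (intro set_eqI iffI)
      fix x assume x: "x \<in> (\<lambda>x. first_diff (fst x) (snd x)) -` {d} \<inter> space (\<mu> \<Otimes>\<^sub>M \<mu>)"
      then have ne: "fst x \<noteq> snd x" unfolding Some first_diff_def by auto
      have "fst x \<in> Qp p" "snd x \<in> Qp p" using x by (auto simp: space_pair_measure)
      then obtain j0 where j0: "fst x j0 \<noteq> snd x j0" "\<forall>i<j0. fst x i = snd x i"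
        using Qp_first_diff_digit ne by blast
      then have "j0 = j" using x first_diff_eq_Some[OF j0] unfolding Some by simp
      then show "x \<in> {x \<in> space (\<mu> \<Otimes>\<^sub>M \<mu>). \<forall>k<j. fst x k = snd x k} - {x \<in> space (\<mu> \<Otimes>\<^sub>M \<mu>). fst x j = snd x j}"
        using j0 x by auto
    next
      fix x assume "x \<in> {x \<in> space (\<mu> \<Otimes>\<^sub>M \<mu>). \<forall>k<j. fst x k = snd x k} - {x \<in> space (\<mu> \<Otimes>\<^sub>M \<mu>). fst x j = snd x j}"
      then show "x \<in> (\<lambda>x. first_diff (fst x) (snd x)) -` {d} \<inter> space (\<mu> \<Otimes>\<^sub>M \<mu>)"
        using first_diff_eq_Some[of "fst x" j "snd x"] unfolding Some by auto
    qed
    then show ?thesis using digits_agree_sets digit_eq_sets by (simp add: sets.Diff)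
  qed
qed simp

end

context heat_kernel
begin

lemma prho_psub_eq_first_diff:
  assumes "y \<in> Qp p" "c \<in> Qp p"
  shows "prho \<mu> p b \<sigma> t (psub p y c) =
    (case first_diff y c of None \<Rightarrow> prho \<mu> p b \<sigma> t pzero | Some j \<Rightarrow> kernel_series j)"
proof (cases "y = c")
  case False
  then obtain j where j: "y j \<noteq> c j" "\<forall>i<j. y i = c i" using Qp_first_diff_digit[OF assms] by blast
  then show ?thesis using prho_psub_first_diff[OF assms j] first_diff_eq_Some[OF j] by simp
qed (use assms in \<open>simp add: psub_self first_diff_def\<close>)

lemma prho_psub_measurable:
  assumes "f \<in> measurable M \<mu>" "g \<in> measurable M \<mu>"
  shows "(\<lambda>x. ennreal (prho \<mu> p b \<sigma> t (psub p (f x) (g x)))) \<in> borel_measurable M"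
proof -
  let ?H = "\<lambda>d. case d of None \<Rightarrow> prho \<mu> p b \<sigma> t pzero | Some j \<Rightarrow> kernel_series j"
  have "(\<lambda>x. ?H (first_diff (fst x) (snd x))) \<in> borel_measurable (\<mu> \<Otimes>\<^sub>M \<mu>)"
    by (rule measurable_compose[OF first_diff_measurable]) simp
  then have "(\<lambda>x. prho \<mu> p b \<sigma> t (psub p (fst x) (snd x))) \<in> borel_measurable (\<mu> \<Otimes>\<^sub>M \<mu>)"
    by (rule measurable_cong[THEN iffD1, rotated])
      (auto simp: space_pair_measure prho_psub_eq_first_diff)
  from measurable_comp[OF measurable_Pair[OF assms] this] show ?thesis by (simp add: comp_def)
qed

text \<open>The density of the first k positions of the walk started at 0, restricted to a ball.\<close>

definition chain_density :: "int \<Rightarrow> nat \<Rightarrow> (nat \<Rightarrow> int \<Rightarrow> nat) \<Rightarrow> ennreal" where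
  "chain_density A k xs = indicator (PiE {..<k} (\<lambda>_. pball p pzero A)) xs *
     (\<Prod>i<k. ennreal (prho \<mu> p b \<sigma> t (psub p (xs i) (if i = 0 then pzero else xs (i - 1)))))"

lemma chain_density_measurable: "chain_density A k \<in> borel_measurable (PiM {..<k} (\<lambda>_. \<mu>))"
  unfolding chain_density_def
proof (intro borel_measurable_times_ennreal borel_measurable_indicator borel_measurable_prod_ennreal)
  show "PiE {..<k} (\<lambda>_. pball p pzero A) \<in> sets (PiM {..<k} (\<lambda>_. \<mu>))"
    by (intro sets_PiM_I_finite) auto
  fix i assume i: "i \<in> {..<k}"
  have "(\<lambda>xs. if i = 0 then pzero else xs (i - 1)) \<in> measurable (PiM {..<k} (\<lambda>_. \<mu>)) \<mu>"
    using i pzero_Qp measurable_component_singleton[of "i - 1" "{..<k}" "\<lambda>_. \<mu>"] by (cases "i = 0") auto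
  then show "(\<lambda>xs. ennreal (prho \<mu> p b \<sigma> t (psub p (xs i) (if i = 0 then pzero else xs (i - 1)))))
      \<in> borel_measurable (PiM {..<k} (\<lambda>_. \<mu>))"
    using measurable_component_singleton[OF i, of "\<lambda>_. \<mu>"] by (intro prho_psub_measurable) auto
qed

lemma chain_density_Suc:
  assumes xs: "xs \<in> space (PiM {..<k} (\<lambda>_. \<mu>))"
  shows "chain_density A (Suc k) (xs(k := y)) = chain_density A k xs *
    (indicator (pball p pzero A) y * ennreal (prho \<mu> p b \<sigma> t (psub p y (if k = 0 then pzero else xs (k - 1)))))"
proof -
  have ext: "xs \<in> extensional {..<k}" using xs by (simp add: space_PiM PiE_def)
  have "xs(k := y) \<in> PiE {..<Suc k} (\<lambda>_. pball p pzero A) \<longleftrightarrow>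
      xs \<in> PiE {..<k} (\<lambda>_. pball p pzero A) \<and> y \<in> pball p pzero A"
    using ext by (auto simp: PiE_def Pi_iff extensional_def less_Suc_eq split: if_splits)
  then have ind: "indicator (PiE {..<Suc k} (\<lambda>_. pball p pzero A)) (xs(k := y)) =
      (indicator (PiE {..<k} (\<lambda>_. pball p pzero A)) xs * indicator (pball p pzero A) y :: ennreal)"
    by (simp add: indicator_def)
  have "(\<Prod>i<k. ennreal (prho \<mu> p b \<sigma> t (psub p ((xs(k := y)) i) (if i = 0 then pzero else (xs(k := y)) (i - 1))))) =
      (\<Prod>i<k. ennreal (prho \<mu> p b \<sigma> t (psub p (xs i) (if i = 0 then pzero else xs (i - 1)))))"
    by (intro prod.cong refl) auto
  moreover have "(if k = 0 then pzero else (xs(k := y)) (k - 1)) = (if k = 0 then pzero else xs (k - 1))"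
    by auto
  ultimately have "(\<Prod>i<Suc k. ennreal (prho \<mu> p b \<sigma> t (psub p ((xs(k := y)) i)
        (if i = 0 then pzero else (xs(k := y)) (i - 1))))) =
      (\<Prod>i<k. ennreal (prho \<mu> p b \<sigma> t (psub p (xs i) (if i = 0 then pzero else xs (i - 1))))) *
      ennreal (prho \<mu> p b \<sigma> t (psub p y (if k = 0 then pzero else xs (k - 1))))"
    by simp
  then show ?thesis unfolding chain_density_def ind by (simp only: mult_ac)
qed

text \<open>Integrating out the last position with the previous ones in the ball contributes the
  factor ball_retention A, whatever the previous position is.\<close>

lemma nn_integral_chain_density_last:
  assumes xs: "xs \<in> space (PiM {..<k} (\<lambda>_. \<mu>))"
  shows "(\<integral>\<^sup>+ y. chain_density A (Suc k) (xs(k := y)) \<partial>\<mu>) = chain_density A k xs * ennreal (ball_retention A)"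
proof -
  define c where "c = (if k = 0 then pzero else xs (k - 1))"
  have cq: "c \<in> Qp p"
    using pzero_Qp PiE_mem[OF xs[unfolded space_PiM], of "k - 1"] unfolding c_def by auto
  have "(\<integral>\<^sup>+ y. chain_density A (Suc k) (xs(k := y)) \<partial>\<mu>) = chain_density A k xs *
      (\<integral>\<^sup>+ y. indicator (pball p pzero A) y * ennreal (prho \<mu> p b \<sigma> t (psub p y c)) \<partial>\<mu>)"
    unfolding chain_density_Suc[OF xs] c_def[symmetric]
  proof (rule nn_integral_cmult)
    have "(\<lambda>y. ennreal (prho \<mu> p b \<sigma> t (psub p (id y) ((\<lambda>_. c) y)))) \<in> borel_measurable \<mu>"
      using cq by (intro prho_psub_measurable) auto
    then show "(\<lambda>y. indicator (pball p pzero A) y * ennreal (prho \<mu> p b \<sigma> t (psub p y c))) \<in> borel_measurable \<mu>"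
      by simp
  qed
  also have "\<dots> = chain_density A k xs * ennreal (ball_retention A)"
  proof (cases "chain_density A k xs = 0")
    case False
    then have "xs \<in> PiE {..<k} (\<lambda>_. pball p pzero A)" unfolding chain_density_def by (auto simp: indicator_def)
    then have "c \<in> pball p pzero A" unfolding c_def using pzero_Qp by (auto simp: pball_def digits_agree_def)
    then show ?thesis using nn_integral_pball_prho by simp
  qed simp
  finally show ?thesis .
qed

lemma nn_integral_chain_density:
  "integral\<^sup>N (PiM {..<k} (\<lambda>_. \<mu>)) (chain_density A k) = ennreal (ball_retention A) ^ k"
proof (induction k)
  case 0
  have "chain_density A 0 (\<lambda>_. undefined) = 1" unfolding chain_density_def by simp
  then show ?case by (simp add: PiM_empty nn_integral_count_space_finite)
next
  case (Suc k)
  interpret product_sigma_finite "\<lambda>_::nat. \<mu>"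
    by (intro product_sigma_finite.intro sigma_finite_haar)
  have "integral\<^sup>N (PiM {..<Suc k} (\<lambda>_. \<mu>)) (chain_density A (Suc k)) =
      (\<integral>\<^sup>+ xs. \<integral>\<^sup>+ y. chain_density A (Suc k) (xs(k := y)) \<partial>\<mu> \<partial>PiM {..<k} (\<lambda>_. \<mu>))"
    unfolding lessThan_Suc
    by (rule product_nn_integral_insert) (use chain_density_measurable[of A "Suc k"] in \<open>auto simp: lessThan_Suc\<close>)
  also have "\<dots> = (\<integral>\<^sup>+ xs. chain_density A k xs * ennreal (ball_retention A) \<partial>PiM {..<k} (\<lambda>_. \<mu>))"
    by (intro nn_integral_cong nn_integral_chain_density_last)
  also have "\<dots> = integral\<^sup>N (PiM {..<k} (\<lambda>_. \<mu>)) (chain_density A k) * ennreal (ball_retention A)"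
    by (rule nn_integral_multc[OF chain_density_measurable])
  finally show ?case using Suc.IH by (simp add: mult.commute)
qed

end

section \<open>Short-time asymptotics\<close>

lemma tendsto_power_exp_sandwich:
  fixes I :: "nat \<Rightarrow> real" and c d :: real
  assumes "0 \<le> c" "0 \<le> d"
    and lower: "\<And>N. N \<ge> 1 \<Longrightarrow> 1 - c / real N \<le> I N"
    and upper: "\<And>N. N \<ge> 1 \<Longrightarrow> I N \<le> 1 - (c / real N) * (1 - d / real N)"
  shows "(\<lambda>N. I N ^ N) \<longlonglongrightarrow> exp (- c)"
proof (rule tendsto_sandwich)
  show "(\<lambda>N. (1 + (- c) / real N) ^ N) \<longlonglongrightarrow> exp (- c)" by (rule tendsto_exp_limit_sequentially)
  have "(\<lambda>N. exp (- c + c * d * (1 / real N))) \<longlonglongrightarrow> exp (- c + c * d * 0)"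
    by (intro tendsto_intros lim_1_over_n)
  then show "(\<lambda>N. exp (- c + c * d / real N)) \<longlonglongrightarrow> exp (- c)" by simp
  obtain N0 :: nat where N0: "c < real N0" using reals_Archimedean2 by blast
  have large: "N \<ge> 1 \<and> c / real N \<le> 1" if "max 1 N0 \<le> N" for N
    using that N0 by (simp add: divide_le_eq)
  show "\<forall>\<^sub>F N in sequentially. (1 + (- c) / real N) ^ N \<le> I N ^ N"
    using large lower by (intro eventually_sequentiallyI[of "max 1 N0"] power_mono) auto
  show "\<forall>\<^sub>F N in sequentially. I N ^ N \<le> exp (- c + c * d / real N)"
  proof (rule eventually_sequentiallyI[of "max 1 N0"])
    fix N assume N: "max 1 N0 \<le> N"
    define y where "y = (c / real N) * (1 - d / real N)"
    have "0 \<le> I N" using lower[of N] large[OF N] by linarith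
    moreover have "I N \<le> exp (- y)"
      using upper[of N] large[OF N] exp_ge_add_one_self[of "- y"] unfolding y_def by linarith
    ultimately have "I N ^ N \<le> exp (- y) ^ N" by (intro power_mono)
    also have "exp (- y) ^ N = exp (- c + c * d / real N)"
      using large[OF N] unfolding y_def by (simp add: exp_of_nat_mult[symmetric] field_simps)
    finally show "I N ^ N \<le> exp (- c + c * d / real N)" .
  qed
qed

context heat_kernel
begin

lemma one_minus_ball_retention_sums:
  "(\<lambda>i. weight_drop (A - 1 - int i) * (1 - real p powi (- 1 - int i))) sums (1 - ball_retention A)"
proof -
  have "(\<lambda>i. weight_drop (A - 1 - int i)) sums (1 - sphere_weight A)"
    using weight_drop_down_sums[of "A - 1"] by simp
  moreover have "(\<lambda>i. weight_drop (A - 1 - int i) * real p powi (A - 1 - int i) * real p powi (- A)) sums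
      (kernel_series (A - 1) * real p powi (- A))"
    unfolding kernel_series_def by (intro sums_mult2 summable_sums summable_kernel_series)
  moreover have "weight_drop (A - 1 - int i) * real p powi (A - 1 - int i) * real p powi (- A) =
      weight_drop (A - 1 - int i) * real p powi (- 1 - int i)" for i
    using ppow_add[of "A - 1 - int i" "- A"] by (simp add: mult.assoc)
  ultimately have "(\<lambda>i. weight_drop (A - 1 - int i) - weight_drop (A - 1 - int i) * real p powi (- 1 - int i))
      sums ((1 - sphere_weight A) - kernel_series (A - 1) * real p powi (- A))"
    using sums_diff by fastforce
  then show ?thesis unfolding ball_retention_def by (simp add: algebra_simps)
qed

lemma one_minus_ball_retention_le: "1 - ball_retention A \<le> \<sigma> * t * escape_rate A"
proof (rule sums_le[OF _ one_minus_ball_retention_sums sums_mult[OF escape_rate_sums]])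
  fix i
  have "weight_drop (A - 1 - int i) \<le> \<sigma> * t * (sphere_rate (A - int i) - sphere_rate (A - 1 - int i))"
    using weight_drop_le[of "A - 1 - int i"] by simp
  moreover have "0 \<le> 1 - real p powi (- 1 - int i)" using ppow_mono[of "- 1 - int i" 0] by simp
  ultimately show "weight_drop (A - 1 - int i) * (1 - real p powi (- 1 - int i)) \<le>
      \<sigma> * t * ((sphere_rate (A - int i) - sphere_rate (A - 1 - int i)) * (1 - real p powi (- 1 - int i)))"
    by (simp add: mult.assoc[symmetric] mult_right_mono)
qed

lemma one_minus_ball_retention_ge:
  "\<sigma> * t * escape_rate A * (1 - \<sigma> * t * sphere_rate A) \<le> 1 - ball_retention A"
proof -
  let ?c = "\<sigma> * t * (1 - \<sigma> * t * sphere_rate A)"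
  have "?c * escape_rate A \<le> 1 - ball_retention A"
  proof (rule sums_le[OF _ sums_mult[OF escape_rate_sums] one_minus_ball_retention_sums])
    fix i
    have w: "0 \<le> 1 - real p powi (- 1 - int i)" using ppow_mono[of "- 1 - int i" 0] by simp
    have du: "0 \<le> sphere_rate (A - int i) - sphere_rate (A - 1 - int i)"
      using sphere_rate_mono[of "A - 1 - int i" "A - int i"] by simp
    have "1 - \<sigma> * t * sphere_rate A \<le> 1 - \<sigma> * t * sphere_rate (A - int i)"
      using sphere_rate_mono[of "A - int i" A] sigma_pos t_pos by (simp add: mult_left_mono)
    then have "\<sigma> * t * (sphere_rate (A - int i) - sphere_rate (A - 1 - int i)) * (1 - \<sigma> * t * sphere_rate A) \<le>
        \<sigma> * t * (sphere_rate (A - int i) - sphere_rate (A - 1 - int i)) * (1 - \<sigma> * t * sphere_rate (A - int i))"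
      using sigma_pos t_pos du by (intro mult_left_mono) auto
    then have "?c * (sphere_rate (A - int i) - sphere_rate (A - 1 - int i)) \<le>
        \<sigma> * t * (sphere_rate (A - int i) - sphere_rate (A - 1 - int i)) * (1 - \<sigma> * t * sphere_rate (A - int i))"
      by (simp add: mult_ac)
    also have "\<dots> \<le> weight_drop (A - 1 - int i)" using weight_drop_ge[of "A - 1 - int i"] by simp
    finally show "?c * ((sphere_rate (A - int i) - sphere_rate (A - 1 - int i)) * (1 - real p powi (- 1 - int i)))
        \<le> weight_drop (A - 1 - int i) * (1 - real p powi (- 1 - int i))"
      using w by (metis mult.assoc mult_right_mono)
  qed
  then show ?thesis by (simp add: mult_ac)
qed

end

section \<open>Paths\<close>

definition dyadic_time :: "real \<Rightarrow> nat \<Rightarrow> nat \<Rightarrow> real" where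
  "dyadic_time T n i = real (i + 1) * T / 2 ^ n"

lemma dyadic_time_pos: "0 < T \<Longrightarrow> 0 < dyadic_time T n i"
  unfolding dyadic_time_def by simp

lemma dyadic_time_le: "0 < T \<Longrightarrow> i < 2 ^ n \<Longrightarrow> dyadic_time T n i \<le> T"
proof -
  assume T: "0 < T" and "i < 2 ^ n"
  then have "real (i + 1) \<le> real (2 ^ n)" by (intro of_nat_mono) simp
  then have "real (i + 1) * T \<le> 2 ^ n * T" using T by (intro mult_right_mono) auto
  then show ?thesis unfolding dyadic_time_def by (simp add: divide_le_eq mult.commute)
qed

lemma dyadic_time_diff: "dyadic_time T n i - (if i = 0 then 0 else dyadic_time T n (i - 1)) = T / 2 ^ n"
  unfolding dyadic_time_def by (cases i) (simp_all add: field_simps)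

lemma dyadic_time_Suc: "dyadic_time T n i = dyadic_time T (Suc n) (2 * i + 1)"
  unfolding dyadic_time_def by (simp add: field_simps)

lemma dyadic_time_right_approx:
  assumes "0 < T" "0 \<le> t" "t < T" "0 < \<delta>"
  obtains n i where "i < 2 ^ n" "t \<le> dyadic_time T n i" "dyadic_time T n i < t + \<delta>"
proof -
  obtain n where "(1 / 2) ^ n < \<delta> / T" using real_arch_pow_inv[of "\<delta> / T" "1/2"] assms by auto
  then have hT: "T / 2 ^ n < \<delta>" using assms by (simp add: field_simps power_one_over)
  define i where "i = nat \<lfloor>t * 2 ^ n / T\<rfloor>"
  have "0 \<le> \<lfloor>t * 2 ^ n / T\<rfloor>" using assms by simp
  then have "real i \<le> t * 2 ^ n / T" "t * 2 ^ n / T < real i + 1"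
    unfolding i_def by linarith+
  then have i1: "real i * T \<le> t * 2 ^ n" and i2: "t * 2 ^ n < (real i + 1) * T"
    using assms by (simp_all add: field_simps)
  have "real i * T < T * 2 ^ n"
  proof -
    have "real i * T \<le> t * 2 ^ n" by (rule i1)
    also have "\<dots> < T * 2 ^ n" using assms by simp
    finally show ?thesis .
  qed
  then have "real i < 2 ^ n" using assms by (simp add: mult.commute)
  then have "i < 2 ^ n" by (metis of_nat_less_iff of_nat_numeral of_nat_power)
  moreover have "t \<le> dyadic_time T n i" unfolding dyadic_time_def using i2 by (simp add: field_simps)
  moreover have "dyadic_time T n i < t + \<delta>"
  proof -
    have "dyadic_time T n i = real i * T / 2 ^ n + T / 2 ^ n" unfolding dyadic_time_def by (simp add: field_simps)
    also have "real i * T / 2 ^ n \<le> t" using i1 by (simp add: field_simps)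
    finally show ?thesis using hT by simp
  qed
  ultimately show ?thesis by (rule that)
qed

context padic
begin

lemma cadlag_paths_Qp: "\<omega> \<in> cadlag_paths p \<Longrightarrow> 0 \<le> t \<Longrightarrow> \<omega> t \<in> Qp p"
  unfolding cadlag_paths_def by auto

lemma cadlag_paths_right_digits_agree:
  assumes "\<omega> \<in> cadlag_paths p" "0 \<le> t"
  obtains \<delta> where "0 < \<delta>" "\<And>s. t \<le> s \<Longrightarrow> s < t + \<delta> \<Longrightarrow> digits_agree M (\<omega> s) (\<omega> t)"
proof -
  have "\<forall>e>0. \<exists>\<delta>>0. \<forall>s. t \<le> s \<and> s < t + \<delta> \<longrightarrow> pdist p (\<omega> s) (\<omega> t) < e"
    using assms unfolding cadlag_paths_def by auto
  then obtain \<delta> where "0 < \<delta>" and \<delta>: "\<forall>s. t \<le> s \<and> s < t + \<delta> \<longrightarrow> pdist p (\<omega> s) (\<omega> t) < real p powi (- (M - 1))"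
    using ppow_pos by blast
  show ?thesis
  proof (rule that)
    fix s assume "t \<le> s" "s < t + \<delta>"
    then show "digits_agree M (\<omega> s) (\<omega> t)"
      using \<delta> assms cadlag_paths_Qp[OF assms(1)] by (intro digits_agree_if_pdist_less) auto
  qed fact
qed

lemma cadlag_paths_left_digits_agree:
  assumes "\<omega> \<in> cadlag_paths p" "0 < t"
  obtains \<delta> L where "0 < \<delta>" "L \<in> Qp p" "\<And>s. 0 \<le> s \<Longrightarrow> t - \<delta> < s \<Longrightarrow> s < t \<Longrightarrow> digits_agree M (\<omega> s) L"
proof -
  have "\<exists>L\<in>Qp p. \<forall>e>0. \<exists>\<delta>>0. \<forall>s. t - \<delta> < s \<and> s < t \<longrightarrow> pdist p (\<omega> s) L < e"
    using assms unfolding cadlag_paths_def by auto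
  then obtain L where L: "L \<in> Qp p" "\<forall>e>0. \<exists>\<delta>>0. \<forall>s. t - \<delta> < s \<and> s < t \<longrightarrow> pdist p (\<omega> s) L < e"
    by blast
  obtain \<delta> where "0 < \<delta>" and \<delta>: "\<forall>s. t - \<delta> < s \<and> s < t \<longrightarrow> pdist p (\<omega> s) L < real p powi (- (M - 1))"
    using L(2) ppow_pos by blast
  show ?thesis
  proof (rule that)
    fix s assume "0 \<le> s" "t - \<delta> < s" "s < t"
    then show "digits_agree M (\<omega> s) L"
      using \<delta> L(1) cadlag_paths_Qp[OF assms(1)] by (intro digits_agree_if_pdist_less) auto
  qed fact+
qed

text \<open>Near t the path agrees in the digits below 1 with omega(t) on the right and with its left
  limit on the left.\<close>

lemma cadlag_paths_locally_bounded:
  assumes \<omega>: "\<omega> \<in> cadlag_paths p" and t: "0 \<le> t"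
  shows "\<exists>\<delta>>0. \<exists>C. \<forall>s. 0 \<le> s \<and> \<bar>s - t\<bar> < \<delta> \<longrightarrow> pabs p (\<omega> s) \<le> C"
proof -
  have bound: "pabs p y \<le> max (pabs p x) 1" if "x \<in> Qp p" "y \<in> Qp p" "digits_agree 1 y x" for x y
    using pabs_le_max_if_agree[OF that(2,1,3)] ppow_mono[of "- 1" 0] by simp
  obtain d1 where d1: "0 < d1" "\<And>s. t \<le> s \<Longrightarrow> s < t + d1 \<Longrightarrow> digits_agree 1 (\<omega> s) (\<omega> t)"
    using cadlag_paths_right_digits_agree[OF \<omega> t] by blast
  have right: "pabs p (\<omega> s) \<le> max (pabs p (\<omega> t)) 1" if "t \<le> s" "s < t + d1" for s
    using bound d1(2) that t cadlag_paths_Qp[OF \<omega>] by simp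
  show ?thesis
  proof (cases "t = 0")
    case True
    then show ?thesis using right d1(1) by (intro exI[of _ d1] conjI exI[of _ "max (pabs p (\<omega> t)) 1"]) auto
  next
    case False
    then have "0 < t" using t by simp
    then obtain d2 L where d2: "0 < d2" "L \<in> Qp p"
      "\<And>s. 0 \<le> s \<Longrightarrow> t - d2 < s \<Longrightarrow> s < t \<Longrightarrow> digits_agree 1 (\<omega> s) L"
      using cadlag_paths_left_digits_agree[OF \<omega>] by blast
    have "pabs p (\<omega> s) \<le> max (max (pabs p (\<omega> t)) 1) (max (pabs p L) 1)"
      if "0 \<le> s" "\<bar>s - t\<bar> < min d1 d2" for s
    proof (cases "t \<le> s")
      case True
      moreover have "s < t + d1" using that(2) by (simp add: abs_less_iff)
      ultimately show ?thesis using right by fastforce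
    next
      case False
      then have "pabs p (\<omega> s) \<le> max (pabs p L) 1"
        using bound d2 that cadlag_paths_Qp[OF \<omega>] by auto
      then show ?thesis by simp
    qed
    then show ?thesis using d1(1) d2(1) by (intro exI[of _ "min d1 d2"]) auto
  qed
qed

lemma cadlag_paths_bdd_above:
  assumes \<omega>: "\<omega> \<in> cadlag_paths p"
  shows "bdd_above ((\<lambda>t. pabs p (\<omega> t)) ` {0..T})"
proof -
  have "\<forall>t\<in>{0..T}. \<exists>d. d > 0 \<and> (\<exists>C. \<forall>s. 0 \<le> s \<and> \<bar>s - t\<bar> < d \<longrightarrow> pabs p (\<omega> s) \<le> C)"
    using cadlag_paths_locally_bounded[OF \<omega>] by auto
  then obtain d where d: "\<forall>t\<in>{0..T}. d t > 0 \<and> (\<exists>C. \<forall>s. 0 \<le> s \<and> \<bar>s - t\<bar> < d t \<longrightarrow> pabs p (\<omega> s) \<le> C)"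
    by (metis bchoice)
  then obtain C where "\<forall>t\<in>{0..T}. \<forall>s. 0 \<le> s \<and> \<bar>s - t\<bar> < d t \<longrightarrow> pabs p (\<omega> s) \<le> C t"
    by (metis bchoice)
  with d have dC: "\<forall>t\<in>{0..T}. d t > 0 \<and> (\<forall>s. 0 \<le> s \<and> \<bar>s - t\<bar> < d t \<longrightarrow> pabs p (\<omega> s) \<le> C t)"
    by blast
  then have "{0..T} \<subseteq> (\<Union>t\<in>{0..T}. ball t (d t))" by force
  then obtain K where K: "K \<subseteq> {0..T}" "finite K" "{0..T} \<subseteq> (\<Union>t\<in>K. ball t (d t))"
    using compactE_image[OF compact_Icc[of 0 T], of "{0..T}" "\<lambda>t. ball t (d t)"] by auto
  show ?thesis
  proof (rule bdd_aboveI2)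
    fix s assume s: "s \<in> {0..T}"
    then obtain t where t: "t \<in> K" "s \<in> ball t (d t)" using K(3) by blast
    have "pabs p (\<omega> s) \<le> C t" using dC t K(1) s by (auto simp: dist_real_def abs_minus_commute)
    also have "C t \<le> Max (C ` K)" using t K(2) by simp
    finally show "pabs p (\<omega> s) \<le> Max (C ` K)" .
  qed
qed

lemma cadlag_paths_SUP_le_iff:
  assumes \<omega>: "\<omega> \<in> cadlag_paths p" and T: "0 \<le> T"
  shows "(SUP t\<in>{0..T}. pabs p (\<omega> t)) \<le> real p powi (- A) \<longleftrightarrow> (\<forall>t\<in>{0..T}. \<omega> t \<in> pball p pzero A)"
proof -
  have "(SUP t\<in>{0..T}. pabs p (\<omega> t)) \<le> real p powi (- A) \<longleftrightarrow> (\<forall>t\<in>{0..T}. pabs p (\<omega> t) \<le> real p powi (- A))"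
    using T by (intro cSUP_le_iff cadlag_paths_bdd_above[OF \<omega>]) auto
  also have "\<dots> \<longleftrightarrow> (\<forall>t\<in>{0..T}. \<omega> t \<in> pball p pzero A)"
    using pabs_le_ppow_iff_pball cadlag_paths_Qp[OF \<omega>] by simp
  finally show ?thesis .
qed

text \<open>Balls are open and closed, so right continuity of the path suffices.\<close>

lemma cadlag_paths_in_pball_iff_dyadic:
  assumes \<omega>: "\<omega> \<in> cadlag_paths p" and T: "0 < T"
  shows "(\<forall>t\<in>{0..T}. \<omega> t \<in> pball p c A) \<longleftrightarrow> (\<forall>n. \<forall>i<2 ^ n. \<omega> (dyadic_time T n i) \<in> pball p c A)"
proof
  assume "\<forall>t\<in>{0..T}. \<omega> t \<in> pball p c A"
  then show "\<forall>n. \<forall>i<2 ^ n. \<omega> (dyadic_time T n i) \<in> pball p c A"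
    using T dyadic_time_pos dyadic_time_le by (simp add: less_imp_le)
next
  assume dyadic: "\<forall>n. \<forall>i<2 ^ n. \<omega> (dyadic_time T n i) \<in> pball p c A"
  show "\<forall>t\<in>{0..T}. \<omega> t \<in> pball p c A"
  proof
    fix t assume t: "t \<in> {0..T}"
    show "\<omega> t \<in> pball p c A"
    proof (cases "t = T")
      case True
      then show ?thesis using dyadic[rule_format, of 0 0] by (simp add: dyadic_time_def)
    next
      case False
      then have tT: "0 \<le> t" "t < T" using t by auto
      obtain \<delta> where "0 < \<delta>" and \<delta>: "\<And>s. t \<le> s \<Longrightarrow> s < t + \<delta> \<Longrightarrow> digits_agree A (\<omega> s) (\<omega> t)"
        using cadlag_paths_right_digits_agree[OF \<omega> tT(1)] by blast
      obtain n i where "i < 2 ^ n" "t \<le> dyadic_time T n i" "dyadic_time T n i < t + \<delta>"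
        using dyadic_time_right_approx[OF T tT \<open>0 < \<delta>\<close>] by blast
      then have "digits_agree A (\<omega> (dyadic_time T n i)) (\<omega> t)" "\<omega> (dyadic_time T n i) \<in> pball p c A"
        using \<delta> dyadic by auto
      then show ?thesis using cadlag_paths_Qp[OF \<omega> tT(1)] unfolding pball_def digits_agree_def by auto
    qed
  qed
qed

end

section \<open>Staying in a ball\<close>

locale padic_BM = padic_haar + padic_exponent +
  fixes \<sigma> :: real and P :: "(real \<Rightarrow> int \<Rightarrow> nat) measure"
  assumes sigma_pos: "0 < \<sigma>" and BM: "is_padic_BM p b \<sigma> \<mu> P"

sublocale padic_BM \<subseteq> P: prob_space P
  using BM unfolding is_padic_BM_def by simp

context padic_BM
begin

lemma space_P: "space P = cadlag_paths p"
  using BM unfolding is_padic_BM_def by simp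

lemma emeasure_coordinates_in:
  assumes "1 \<le> k" "0 < ts 0" "\<forall>i. Suc i < k \<longrightarrow> ts i < ts (Suc i)" "\<forall>i<k. U i \<in> padic_borel p"
  shows "emeasure P {\<omega> \<in> space P. \<forall>i<k. \<omega> (ts i) \<in> U i} =
    (\<integral>\<^sup>+ xs. indicator (PiE {..<k} U) xs *
      (\<Prod>i<k. ennreal (prho \<mu> p b \<sigma> (ts i - (if i = 0 then 0 else ts (i - 1)))
        (psub p (xs i) (if i = 0 then pzero else xs (i - 1))))) \<partial>PiM {..<k} (\<lambda>_. \<mu>))"
  using BM assms unfolding is_padic_BM_def by blast

lemma coordinate_sets: "0 \<le> t \<Longrightarrow> U \<in> padic_borel p \<Longrightarrow> {\<omega> \<in> space P. \<omega> t \<in> U} \<in> sets P"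
  using BM unfolding is_padic_BM_def skorokhod_sets_def space_P by (auto intro: sigma_sets.Basic)

lemma ball_retention_power_tendsto:
  assumes "0 < T"
  shows "(\<lambda>N. heat_kernel.ball_retention p b \<sigma> (T / real N) A ^ N) \<longlonglongrightarrow> exp (- (\<sigma> * T * escape_rate A))"
proof (rule tendsto_power_exp_sandwich)
  show "0 \<le> \<sigma> * T * escape_rate A" using escape_rate_nonneg sigma_pos assms by simp
  show "0 \<le> \<sigma> * T * sphere_rate A" using sphere_rate_pos[of A] sigma_pos assms by simp
next
  fix N :: nat assume "N \<ge> 1"
  then interpret heat_kernel p \<mu> b \<sigma> "T / real N"
    using sigma_pos assms by unfold_locales auto
  show "1 - \<sigma> * T * escape_rate A / real N \<le> ball_retention A"
    using one_minus_ball_retention_le[of A] by simp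
  show "ball_retention A \<le> 1 - \<sigma> * T * escape_rate A / real N * (1 - \<sigma> * T * sphere_rate A / real N)"
    using one_minus_ball_retention_ge[of A] by simp
qed

definition dyadic_event :: "real \<Rightarrow> int \<Rightarrow> nat \<Rightarrow> (real \<Rightarrow> int \<Rightarrow> nat) set" where
  "dyadic_event T A n = {\<omega> \<in> space P. \<forall>i<2 ^ n. \<omega> (dyadic_time T n i) \<in> pball p pzero A}"

lemma dyadic_event_sets:
  assumes "0 < T"
  shows "dyadic_event T A n \<in> sets P"
proof -
  have "(0::nat) \<in> {..<2 ^ n}" by simp
  then have "dyadic_event T A n = (\<Inter>i<2 ^ n. {\<omega> \<in> space P. \<omega> (dyadic_time T n i) \<in> pball p pzero A})"
    unfolding dyadic_event_def by blast
  also have "\<dots> \<in> sets P"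
    using coordinate_sets dyadic_time_pos[OF assms]
    by (intro sets.finite_INT) (auto simp: less_imp_le lessThan_empty_iff)
  finally show ?thesis .
qed

lemma decseq_dyadic_event: "decseq (dyadic_event T A)"
  unfolding decseq_Suc_iff
proof
  fix n
  have "2 * i + 1 < 2 ^ Suc n" if "i < 2 ^ n" for i :: nat using that by simp
  then show "dyadic_event T A (Suc n) \<subseteq> dyadic_event T A n"
    unfolding dyadic_event_def by (auto simp only: dyadic_time_Suc[of T n])
qed

lemma measure_dyadic_event:
  assumes "0 < T"
  shows "measure P (dyadic_event T A n) = heat_kernel.ball_retention p b \<sigma> (T / 2 ^ n) A ^ 2 ^ n"
proof -
  interpret heat_kernel p \<mu> b \<sigma> "T / 2 ^ n"
    using sigma_pos assms by unfold_locales auto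
  have "emeasure P (dyadic_event T A n) =
    (\<integral>\<^sup>+ xs. indicator (PiE {..<2 ^ n} (\<lambda>_. pball p pzero A)) xs *
      (\<Prod>i<2 ^ n. ennreal (prho \<mu> p b \<sigma> (dyadic_time T n i - (if i = 0 then 0 else dyadic_time T n (i - 1)))
        (psub p (xs i) (if i = 0 then pzero else xs (i - 1))))) \<partial>PiM {..<2 ^ n} (\<lambda>_. \<mu>))"
    unfolding dyadic_event_def
    using assms dyadic_time_pos
    by (intro emeasure_coordinates_in[where ts = "dyadic_time T n" and U = "\<lambda>_. pball p pzero A"])
      (auto simp: dyadic_time_def divide_strict_right_mono)
  also have "\<dots> = integral\<^sup>N (PiM {..<2 ^ n} (\<lambda>_. \<mu>)) (chain_density A (2 ^ n))"
    unfolding chain_density_def dyadic_time_diff ..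
  also have "\<dots> = ennreal (ball_retention A ^ 2 ^ n)"
    using nn_integral_chain_density ball_retention_nonneg by (simp add: ennreal_power)
  finally show ?thesis using ball_retention_nonneg by (simp add: measure_def)
qed

lemma stay_in_pball_eq_INT_dyadic_event:
  assumes "0 < T"
  shows "{\<omega> \<in> space P. \<forall>t\<in>{0..T}. \<omega> t \<in> pball p pzero A} = (\<Inter>n. dyadic_event T A n)"
proof (intro set_eqI)
  fix \<omega>
  show "\<omega> \<in> {\<omega> \<in> space P. \<forall>t\<in>{0..T}. \<omega> t \<in> pball p pzero A} \<longleftrightarrow> \<omega> \<in> (\<Inter>n. dyadic_event T A n)"
  proof (cases "\<omega> \<in> space P")
    case True
    then show ?thesis
      using cadlag_paths_in_pball_iff_dyadic[OF _ assms, where c = pzero and A = A]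
      unfolding dyadic_event_def space_P by simp
  qed (simp add: dyadic_event_def)
qed

lemma measure_start_in_pball: "measure P {\<omega> \<in> space P. \<omega> 0 \<in> pball p pzero A} = 1"
proof -
  have "AE \<omega> in P. \<omega> 0 = pzero" using BM unfolding is_padic_BM_def by simp
  then have ae: "AE \<omega> in P. \<omega> \<in> {\<omega> \<in> space P. \<omega> 0 \<in> pball p pzero A}"
    using AE_space by eventually_elim (auto simp: pball_def digits_agree_def pzero_Qp)
  have "{\<omega> \<in> space P. \<omega> 0 \<in> pball p pzero A} \<in> sets P" by (simp add: coordinate_sets)
  from P.AE_in_set_eq_1[OF this, THEN iffD1, OF ae] show ?thesis .
qed

theorem measure_stay_in_pball:
  assumes "0 \<le> T"
  shows "measure P {\<omega> \<in> space P. \<forall>t\<in>{0..T}. \<omega> t \<in> pball p pzero A} = exp (- (\<sigma> * T * escape_rate A))"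
proof (cases "T = 0")
  case False
  then have T: "0 < T" using assms by simp
  have "(\<lambda>n. measure P (dyadic_event T A n)) \<longlonglongrightarrow> measure P (\<Inter>n. dyadic_event T A n)"
    using dyadic_event_sets[OF T] decseq_dyadic_event by (intro P.finite_Lim_measure_decseq) auto
  moreover have "(\<lambda>n. measure P (dyadic_event T A n)) \<longlonglongrightarrow> exp (- (\<sigma> * T * escape_rate A))"
    using LIMSEQ_subseq_LIMSEQ[OF ball_retention_power_tendsto[OF T], of "\<lambda>n. 2 ^ n"]
    unfolding measure_dyadic_event[OF T] by (simp add: strict_mono_def comp_def)
  ultimately show ?thesis unfolding stay_in_pball_eq_INT_dyadic_event[OF T] by (rule LIMSEQ_unique)
qed (simp add: measure_start_in_pball)

end

theorem theorem3p1:
  fixes p :: nat and b \<sigma> T :: real and a :: int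
    and \<mu> :: "(int \<Rightarrow> nat) measure" and P :: "(real \<Rightarrow> int \<Rightarrow> nat) measure"
  assumes "prime p" and "0 < b" and "0 < \<sigma>"
    and "is_haar p \<mu>"
    and "is_padic_BM p b \<sigma> \<mu> P"
    and "0 \<le> T"
  shows "measure P {\<omega> \<in> space P. (SUP t\<in>{0..T}. pabs p (\<omega> t)) \<le> real p powr real_of_int a}
         = exp (- \<sigma> * (1 - (real p powr b - 1) / (real p powr (b + 1) - 1)) * T
                  * real p powr (- real_of_int a * b))"
proof -
  interpret padic_BM p \<mu> b \<sigma> P
    using assms prime_ge_2_nat by unfold_locales auto
  have "real p powr real_of_int a = real p powi a"
    using p_pos by (simp add: powr_real_of_int')
  then have "{\<omega> \<in> space P. (SUP t\<in>{0..T}. pabs p (\<omega> t)) \<le> real p powr real_of_int a} =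
      {\<omega> \<in> space P. \<forall>t\<in>{0..T}. \<omega> t \<in> pball p pzero (- a)}"
    using cadlag_paths_SUP_le_iff[of _ T "- a"] assms(6) unfolding space_P by auto
  moreover have "escape_rate (- a) = real p powr (- real_of_int a * b) * (1 - (real p powr b - 1) / (real p powr (b + 1) - 1))"
    unfolding escape_rate_def sphere_rate_def pb_def using p_pos by (simp add: powr_add)
  ultimately show ?thesis using measure_stay_in_pball[OF assms(6)] by (simp add: mult_ac)
qed

end
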